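(* Let $\alpha>0$, $r\geq q\geq p\geq2$ and $\eta>0$. Then for $f\in\mathcal H^s(\mathbb T^3)$ with $s\geq-2\alpha\eta-\frac{2\alpha}{q}+\frac12-\frac1p$, the free evolution $B_{f^\omega}=e^{-t(-\Delta)^\alpha}f^\omega$ satisfies $$\|B_{f^\omega}\|_{L^r_\omega L^{(\eta,q)}_tL^p_x}\lesssim\sqrt r\,\|f\|_{\mathcal H^s_x},$$ with implicit constant independent of $r$ and $f$.
   Context: $\mathcal H^s(\mathbb T^3)$ has norm $\|f\|_{\mathcal H^s}^2=\sum_{k\in\mathbb Z^3}(1+|k|^2)^s|a_k|^2$ where $f=\sum_ka_ke^{ik\cdot x}$, $a_k\in\mathbb C^3$. $(\Omega,\mathcal A,P)$ is a probability space and $(l_k(\omega))_{k\in\mathbb Z^3}$ are real-valued, zero-mean, independent random variables with distributions $\mu_k$ satisfying $\left|\int_{\mathbb R}e^{\gamma x}d\mu_k(x)\right|\le e^{c\gamma^2}$ for all $\gamma\in\mathbb R$, all $k$, for some $c>0$. The randomization is $f^\omega=\sum_kl_k(\omega)a_ke^{ik\cdot x}$ (componentwise) and $e^{-t(-\Delta)^\alpha}f^\omega=\sum_ke^{-t|k|^{2\alpha}}l_k(\omega)a_ke^{ik\cdot x}$. The weighted-in-time norm on a time interval $(0,T)$ is $\|F\|_{L^{(\eta,q)}_tL^p_x}=\left(\int_0^T\|t^\eta F(\cdot,t)\|_{L^p(\mathbb T^3)}^qdt\right)^{1/q}$, and $\|F\|_{L^r_\omega L^{(\eta,q)}_tL^p_x}=\big(\mathbb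 E\,\|F\|_{L^{(\eta,q)}_tL^p_x}^r\big)^{1/r}$. *)

theory Defs
  imports "HOL-Analysis.Analysis" "HOL-Probability.Probability"
begin

text \<open>Frequencies k in Z^3 are of type int^3; points of T^3 are real^3, with T^3
  identified with the fundamental domain [0, 2 pi]^3 and Lebesgue measure.\<close>

definition ksq :: "int^3 \<Rightarrow> real" where
  "ksq k = (\<Sum>i\<in>UNIV. (real_of_int (k$i))^2)"

definition kdot :: "int^3 \<Rightarrow> real^3 \<Rightarrow> real" where
  "kdot k x = (\<Sum>i\<in>UNIV. real_of_int (k$i) * x$i)"

definition torus :: "(real^3) set" where
  "torus = cbox 0 (\<chi> i. 2 * pi)"

text \<open>Real powers of extended nonnegative reals (exponent assumed positive):
  infinity stays infinity.\<close>
definition epow :: "ennreal \<Rightarrow> real \<Rightarrow> ennreal" where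
  "epow x a = (if x = \<top> then \<top> else ennreal (enn2real x powr a))"

text \<open>Sobolev space H^s: f = sum_k a_k e^{ik.x}, a_k in C^3.\<close>
definition in_Hs :: "real \<Rightarrow> (int^3 \<Rightarrow> complex^3) \<Rightarrow> bool" where
  "in_Hs s a \<longleftrightarrow> (\<lambda>k. (1 + ksq k) powr s * (norm (a k))^2) summable_on UNIV"

definition Hs_norm :: "real \<Rightarrow> (int^3 \<Rightarrow> complex^3) \<Rightarrow> real" where
  "Hs_norm s a = sqrt (\<Sum>\<^sub>\<infinity>k. (1 + ksq k) powr s * (norm (a k))^2)"

text \<open>Free evolution of the randomized datum:
  e^{-t(-Delta)^alpha} f^omega (x) = sum_k e^{-t|k|^{2 alpha}} l_k(omega) a_k e^{ik.x}.\<close>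
definition free_evol ::
  "real \<Rightarrow> (int^3 \<Rightarrow> complex^3) \<Rightarrow> (int^3 \<Rightarrow> 'w \<Rightarrow> real) \<Rightarrow> 'w \<Rightarrow> real \<Rightarrow> real^3 \<Rightarrow> complex^3"
  where
  "free_evol \<alpha> a l \<omega> t x =
     (\<Sum>\<^sub>\<infinity>k. (\<chi> j. complex_of_real (exp (- t * (ksq k) powr \<alpha>) * l k \<omega>)
                     * cis (kdot k x) * (a k $ j)))"

definition Lp_norm :: "real \<Rightarrow> (real^3 \<Rightarrow> complex^3) \<Rightarrow> ennreal" where
  "Lp_norm p F = epow (\<integral>\<^sup>+ x \<in> torus. ennreal (norm (F x) powr p) \<partial>lborel) (1 / p)"

definition wLqLp_norm ::
  "real \<Rightarrow> real \<Rightarrow> real \<Rightarrow> real \<Rightarrow> (real \<Rightarrow> real^3 \<Rightarrow> complex^3) \<Rightarrow> ennreal" where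
  "wLqLp_norm T \<eta> q p F =
     epow (\<integral>\<^sup>+ t \<in> {0<..<T}. epow (ennreal (t powr \<eta>) * Lp_norm p (F t)) q \<partial>lborel) (1 / q)"

definition Lr_wLqLp_norm ::
  "'w measure \<Rightarrow> real \<Rightarrow> real \<Rightarrow> real \<Rightarrow> real \<Rightarrow> real \<Rightarrow> ('w \<Rightarrow> real \<Rightarrow> real^3 \<Rightarrow> complex^3) \<Rightarrow> ennreal" where
  "Lr_wLqLp_norm M r T \<eta> q p F =
     epow (\<integral>\<^sup>+ \<omega>. epow (wLqLp_norm T \<eta> q p (F \<omega>)) r \<partial>M) (1 / r)"

end

theory Submission
  imports Defs
begin

(* For a finite truncation S_J of the Fourier series, Khintchine's inequality for the
   independent subgaussian coefficients gives, pointwise in (t, x),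
   E |S_J(t,x)|^r <= (C sqrt r sigma_J(t))^r  with  sigma_J(t)^2 = sum_{k in J} e^{-2t|k|^{2 alpha}} |a_k|^2.
   Since r >= q >= p, Hoelder on the torus and a Hoelder inequality in time with weight
   t^{eta q} sigma_J(t)^q move the expectation inside both norms, leaving the time integral of
   t^{eta q} sigma_J(t)^q.  A weighted Hoelder inequality over the frequencies together with
   int_0^oo t^{eta q} e^{-q t |k|^{2 alpha}} dt ~ <k>^{-2 alpha (eta q + 1)} bounds it by ||f||_{H^s}^q,
   precisely when s >= -2 alpha eta - 2 alpha / q.  Fatou's lemma passes from cubes of frequencies
   to the full series. *)

lemma epow_ennreal: "0 \<le> x \<Longrightarrow> epow (ennreal x) a = ennreal (x powr a)"
  by (simp add: epow_def)

lemma epow_zero [simp]: "a > 0 \<Longrightarrow> epow 0 a = 0"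
  by (simp add: epow_def)

lemma epow_one [simp]: "epow x 1 = x"
  by (cases x) (auto simp: epow_def)

lemma epow_mono:
  assumes "a > 0" "x \<le> y"
  shows "epow x a \<le> epow y a"
proof (cases "y = \<top>")
  case True
  then show ?thesis by (simp add: epow_def)
next
  case False
  then have "x \<noteq> \<top>" using assms top.extremum_unique by blast
  then show ?thesis using False assms
    by (auto simp: epow_def less_top intro!: ennreal_leI powr_mono2 enn2real_mono)
qed

lemma epow_epow: "a > 0 \<Longrightarrow> b > 0 \<Longrightarrow> epow (epow x a) b = epow x (a * b)"
  by (cases x) (auto simp: epow_def powr_powr)

lemma epow_epow_inverse: "a > 0 \<Longrightarrow> epow (epow x a) (1 / a) = x"
  by (simp add: epow_epow)

lemma epow_ennreal_mult:
  "0 \<le> u \<Longrightarrow> 0 \<le> x \<Longrightarrow> b > 0 \<Longrightarrow> epow (ennreal u * ennreal x) b = ennreal (u powr b * x powr b)"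
  by (simp add: ennreal_mult[symmetric] epow_ennreal powr_mult)

lemma borel_measurable_epow [measurable (raw)]:
  assumes [measurable]: "f \<in> borel_measurable N"
  shows "(\<lambda>x. epow (f x) a) \<in> borel_measurable N"
  unfolding epow_def by measurable

lemma epow_Sup_le:
  assumes a: "a > 0"
  shows "epow (Sup A) a \<le> Sup ((\<lambda>y. epow y a) ` A)"
proof -
  define B where "B = Sup ((\<lambda>y. epow y a) ` A)"
  have "y \<le> epow B (1 / a)" if "y \<in> A" for y
  proof -
    have "epow y a \<le> B" unfolding B_def using that by (auto intro: Sup_upper)
    then have "epow (epow y a) (1 / a) \<le> epow B (1 / a)" using a by (intro epow_mono) auto
    then show ?thesis using a by (simp add: epow_epow_inverse)
  qed
  then have "epow (Sup A) a \<le> epow (epow B (1 / a)) a" using a by (intro epow_mono Sup_least) auto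
  also have "\<dots> = B" using a epow_epow_inverse[of "1 / a" B] by simp
  finally show ?thesis unfolding B_def .
qed

lemma mono_Sup_le_imp_liminf_le:
  fixes \<phi> :: "ennreal \<Rightarrow> ennreal"
  assumes "mono \<phi>" and "\<And>A. A \<noteq> {} \<Longrightarrow> \<phi> (Sup A) \<le> Sup (\<phi> ` A)"
  shows "\<phi> (liminf x) \<le> liminf (\<lambda>n. \<phi> (x n))"
proof -
  have "\<phi> (liminf x) = \<phi> (SUP n. INF i\<in>{n..}. x i)" by (simp add: liminf_SUP_INF)
  also have "\<dots> \<le> (SUP n. \<phi> (INF i\<in>{n..}. x i))"
    using assms(2)[of "range (\<lambda>n. INF i\<in>{n..}. x i)"] by (simp add: image_image)
  also have "\<dots> \<le> (SUP n. INF i\<in>{n..}. \<phi> (x i))"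
    by (intro SUP_mono) (auto intro!: INF_greatest monoD[OF assms(1)] INF_lower)
  also have "\<dots> = liminf (\<lambda>n. \<phi> (x n))" by (simp add: liminf_SUP_INF)
  finally show ?thesis .
qed

lemma epow_liminf_le: "a > 0 \<Longrightarrow> epow (liminf x) a \<le> liminf (\<lambda>n. epow (x n) a)"
  by (intro mono_Sup_le_imp_liminf_le epow_Sup_le) (auto intro: monoI epow_mono)

lemma mult_liminf_le:
  fixes c :: ennreal
  shows "c * liminf x \<le> liminf (\<lambda>n. c * x n)"
proof (intro mono_Sup_le_imp_liminf_le[where \<phi>="\<lambda>y. c * y"])
  show "mono (\<lambda>y. c * y)" by (simp add: mono_def mult_left_mono)
  fix A :: "ennreal set"
  show "c * Sup A \<le> Sup ((\<lambda>y. c * y) ` A)"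
    using SUP_mult_left_ennreal[of c "\<lambda>y. y" A] by simp
qed

lemma mult_indicator_le_liminf:
  fixes u :: "nat \<Rightarrow> ennreal"
  shows "v \<le> liminf u \<Longrightarrow> v * indicator A y \<le> liminf (\<lambda>n. u n * indicator A y)"
  by (cases "y \<in> A") auto

lemma powr_le_exp:
  fixes u r :: real
  assumes "0 \<le> u" "0 < r"
  shows "u powr r \<le> (r / exp 1) powr r * exp u"
proof (cases "u = 0")
  case True
  then show ?thesis using assms by simp
next
  case False
  then have u: "u > 0" using assms by auto
  have "ln (u / r) \<le> u / r - 1" using u assms by (intro ln_le_minus_one) auto
  then have "r * ln (u / r) \<le> r * (u / r - 1)" using assms by (intro mult_left_mono) auto
  then have "r * ln u \<le> r * (ln r - 1) + u" using u assms by (simp add: ln_div algebra_simps)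
  then have "exp (r * ln u) \<le> exp (r * (ln r - 1) + u)" by simp
  also have "\<dots> = (r / exp 1) powr r * exp u"
    using assms by (simp add: powr_def exp_add ln_div)
  finally show ?thesis using u by (simp add: powr_def)
qed

lemma powr_sum_le_card_powr_sum:
  fixes u :: "'i \<Rightarrow> real"
  assumes I: "finite I" and u: "\<And>i. i \<in> I \<Longrightarrow> 0 \<le> u i" and r: "r > 0"
  shows "(\<Sum>i\<in>I. u i) powr r \<le> real (card I) powr r * (\<Sum>i\<in>I. u i powr r)"
proof (cases "I = {}")
  case True
  then show ?thesis by simp
next
  case False
  define m where "m = Max (u ` I)"
  have "m \<in> u ` I" unfolding m_def using I False by (intro Max_in) auto
  then obtain i0 where i0: "i0 \<in> I" "u i0 = m" by auto
  have "(\<Sum>i\<in>I. u i) \<le> real (card I) * m"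
    using sum_bounded_above[of I u m] I by (auto simp: m_def)
  then have "(\<Sum>i\<in>I. u i) powr r \<le> (real (card I) * m) powr r"
    using r u by (intro powr_mono2) (auto simp: sum_nonneg)
  also have "\<dots> = real (card I) powr r * m powr r" using u i0 by (simp add: powr_mult)
  also have "\<dots> \<le> real (card I) powr r * (\<Sum>i\<in>I. u i powr r)"
    using i0 I by (intro mult_left_mono) (auto intro: member_le_sum)
  finally show ?thesis .
qed

lemma Young_weighted:
  fixes u v a b \<rho> :: real
  assumes "0 \<le> u" "0 < v" "0 < a" "0 < b" "1 < \<rho>"
  shows "u \<le> a powr (1/\<rho>) * b powr (1 - 1/\<rho>) *
             (u powr \<rho> * v powr (1-\<rho>) / (\<rho>*a) + (1 - 1/\<rho>) * v / b)"
proof (cases "u = 0")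
  case True
  then show ?thesis using assms by (auto intro!: mult_nonneg_nonneg add_nonneg_nonneg)
next
  case False
  then have u: "u > 0" using assms by auto
  define X where "X = u powr \<rho> * v powr (1-\<rho>) / a"
  define Y where "Y = v / b"
  define K where "K = a powr (1/\<rho>) * b powr (1 - 1/\<rho>)"
  have K: "K > 0" using assms by (simp add: K_def)
  have "X powr (1/\<rho>) * Y powr (1 - 1/\<rho>) = u * (v powr ((1-\<rho>)/\<rho>) * v powr (1 - 1/\<rho>)) / K"
    using u assms by (simp add: X_def Y_def K_def powr_divide powr_mult powr_powr)
  also have "v powr ((1-\<rho>)/\<rho>) * v powr (1 - 1/\<rho>) = 1"
  proof -
    have "(1-\<rho>)/\<rho> + (1 - 1/\<rho>) = 0" using assms by (simp add: field_simps)
    then show ?thesis using assms by (simp flip: powr_add)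
  qed
  finally have "u = K * (X powr (1/\<rho>) * Y powr (1 - 1/\<rho>))" using K by simp
  also have "\<dots> \<le> K * ((1/\<rho>) * X + (1 - 1/\<rho>) * Y)"
    using Youngs_inequality_0[of "1/\<rho>" "1 - 1/\<rho>" X Y] u K assms
    by (intro mult_left_mono) (auto simp: X_def Y_def)
  finally show ?thesis by (simp add: K_def X_def Y_def)
qed


section \<open>Weighted Hoelder inequalities\<close>

lemma nn_integral_le_by_Young:
  fixes N :: "'a measure" and f w :: "'a \<Rightarrow> real"
  assumes \<rho>: "1 < \<rho>" and [measurable]: "f \<in> borel_measurable N" "w \<in> borel_measurable N"
    and f0: "\<And>x. x \<in> space N \<Longrightarrow> 0 \<le> f x" and w0: "\<And>x. x \<in> space N \<Longrightarrow> 0 < w x"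
    and A: "(\<integral>\<^sup>+x. ennreal (f x powr \<rho> * w x powr (1-\<rho>)) \<partial>N) = ennreal a" and a: "0 < a"
    and W: "(\<integral>\<^sup>+x. ennreal (w x) \<partial>N) = ennreal b" and b: "0 < b"
  shows "(\<integral>\<^sup>+x. ennreal (f x) \<partial>N) \<le> ennreal (a powr (1/\<rho>) * b powr (1 - 1/\<rho>))"
proof -
  define K where "K = a powr (1/\<rho>) * b powr (1 - 1/\<rho>)"
  define g where "g x = f x powr \<rho> * w x powr (1-\<rho>)" for x
  have K: "K > 0" using a b by (simp add: K_def)
  have c: "0 \<le> K / (\<rho>*a)" "0 \<le> K * (1 - 1/\<rho>) / b" using K a b \<rho> by auto
  have "(\<integral>\<^sup>+x. ennreal (f x) \<partial>N)
      \<le> (\<integral>\<^sup>+x. ennreal (K / (\<rho>*a)) * ennreal (g x) + ennreal (K * (1 - 1/\<rho>) / b) * ennreal (w x) \<partial>N)"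
  proof (intro nn_integral_mono)
    fix x assume x: "x \<in> space N"
    have g0: "0 \<le> g x" by (simp add: g_def)
    have "f x \<le> K * (g x / (\<rho>*a) + (1 - 1/\<rho>) * w x / b)"
      using Young_weighted[OF f0[OF x] w0[OF x] a b \<rho>] by (simp add: K_def g_def)
    also have "\<dots> = K / (\<rho>*a) * g x + K * (1 - 1/\<rho>) / b * w x"
      by (simp add: algebra_simps)
    finally have "ennreal (f x) \<le> ennreal (K / (\<rho>*a) * g x + K * (1 - 1/\<rho>) / b * w x)"
      by (rule ennreal_leI)
    also have "\<dots> = ennreal (K / (\<rho>*a) * g x) + ennreal (K * (1 - 1/\<rho>) / b * w x)"
      using c g0 w0[OF x] by (intro ennreal_plus mult_nonneg_nonneg) auto
    also have "\<dots> = ennreal (K / (\<rho>*a)) * ennreal (g x) + ennreal (K * (1 - 1/\<rho>) / b) * ennreal (w x)"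
      by (simp only: ennreal_mult[OF c(1) g0] ennreal_mult[OF c(2) less_imp_le[OF w0[OF x]]])
    finally show "ennreal (f x) \<le> \<dots>" .
  qed
  also have "\<dots> = ennreal (K / (\<rho>*a)) * ennreal a + ennreal (K * (1 - 1/\<rho>) / b) * ennreal b"
    using A W by (simp add: g_def nn_integral_add nn_integral_cmult)
  also have "\<dots> = ennreal (K / \<rho> + K * (1 - 1/\<rho>))"
  proof -
    have "0 \<le> K / \<rho>" "0 \<le> K * (1 - 1/\<rho>)" using K \<rho> by auto
    then show ?thesis
      using c a b by (simp add: ennreal_mult[symmetric] ennreal_plus[symmetric] del: ennreal_plus)
  qed
  also have "K / \<rho> + K * (1 - 1/\<rho>) = K"
    by (simp add: algebra_simps)
  finally show ?thesis by (simp add: K_def)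
qed

lemma nn_integral_eq_0_of_weighted_eq_0:
  fixes N :: "'a measure" and f w :: "'a \<Rightarrow> real"
  assumes [measurable]: "f \<in> borel_measurable N" "w \<in> borel_measurable N"
    and w0: "\<And>x. x \<in> space N \<Longrightarrow> 0 < w x"
    and zero: "(\<integral>\<^sup>+x. ennreal (f x powr \<rho> * w x powr (1-\<rho>)) \<partial>N) = 0 \<or> (\<integral>\<^sup>+x. ennreal (w x) \<partial>N) = 0"
  shows "(\<integral>\<^sup>+x. ennreal (f x) \<partial>N) = 0"
proof -
  have "AE x in N. f x = 0"
    using zero
  proof
    assume "(\<integral>\<^sup>+x. ennreal (f x powr \<rho> * w x powr (1-\<rho>)) \<partial>N) = 0"
    then have "AE x in N. ennreal (f x powr \<rho> * w x powr (1-\<rho>)) = 0"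
      by (subst (asm) nn_integral_0_iff_AE) auto
    then show ?thesis
      using AE_space
    proof eventually_elim
      case (elim x)
      then show "f x = 0" using w0[OF elim(2)] by auto
    qed
  next
    assume "(\<integral>\<^sup>+x. ennreal (w x) \<partial>N) = 0"
    then have "AE x in N. ennreal (w x) = 0"
      by (subst (asm) nn_integral_0_iff_AE) auto
    then show ?thesis
      using AE_space by eventually_elim (use w0 in fastforce)
  qed
  then show ?thesis by (intro nn_integral_0_iff_AE[THEN iffD2]) (auto elim: eventually_mono)
qed

lemma nn_integral_Holder_weighted:
  fixes N :: "'a measure" and f w :: "'a \<Rightarrow> real"
  assumes \<rho>: "1 \<le> \<rho>" and [measurable]: "f \<in> borel_measurable N" "w \<in> borel_measurable N"
    and f0: "\<And>x. x \<in> space N \<Longrightarrow> 0 \<le> f x" and w0: "\<And>x. x \<in> space N \<Longrightarrow> 0 < w x"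
    and W_fin: "(\<integral>\<^sup>+x. ennreal (w x) \<partial>N) < \<top>"
  shows "epow (\<integral>\<^sup>+x. ennreal (f x) \<partial>N) \<rho> \<le>
         (\<integral>\<^sup>+x. ennreal (f x powr \<rho> * w x powr (1-\<rho>)) \<partial>N) *
            ennreal (enn2real (\<integral>\<^sup>+x. ennreal (w x) \<partial>N) powr (\<rho> - 1))"
proof -
  define I A W where "I = (\<integral>\<^sup>+x. ennreal (f x) \<partial>N)"
    and "A = (\<integral>\<^sup>+x. ennreal (f x powr \<rho> * w x powr (1-\<rho>)) \<partial>N)"
    and "W = (\<integral>\<^sup>+x. ennreal (w x) \<partial>N)"
  define b where "b = enn2real W"
  have \<rho>0: "\<rho> > 0" using \<rho> by simp
  have W_eq: "W = ennreal b"
    using W_fin by (simp add: W_def b_def less_top[symmetric] ennreal_enn2real)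
  show ?thesis
  proof (cases "A = 0 \<or> W = 0")
    case True
    then have "I = 0"
      unfolding I_def A_def W_def using w0 by (intro nn_integral_eq_0_of_weighted_eq_0) auto
    then show ?thesis using \<rho>0 by (simp add: I_def)
  next
    case False
    then have A_ne: "A \<noteq> 0" by simp
    have b: "b > 0" using False W_eq by (metis ennreal_0 enn2real_nonneg less_eq_real_def b_def)
    show ?thesis
    proof (cases "\<rho> = 1")
      case True
      have "A = I" unfolding A_def I_def using True f0 w0
        by (intro nn_integral_cong) (metis less_irrefl powr_one powr_zero_eq_one mult_1_right diff_self)
      then show ?thesis using True b by (simp add: A_def I_def W_def[symmetric] b_def[symmetric])
    next
      case False
      with \<rho> have \<rho>1: "\<rho> > 1" by simp
      show ?thesis
      proof (cases "A = \<top>")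
        case True
        then show ?thesis
          using b by (simp add: A_def[symmetric] W_def[symmetric] b_def[symmetric] ennreal_mult_top)
      next
        case False
        define a where "a = enn2real A"
        have A_eq: "A = ennreal a" using False by (simp add: a_def less_top[symmetric] ennreal_enn2real)
        have a: "a > 0" using A_ne A_eq by (metis ennreal_0 enn2real_nonneg less_eq_real_def a_def)
        have "I \<le> ennreal (a powr (1/\<rho>) * b powr (1 - 1/\<rho>))"
          using nn_integral_le_by_Young[OF \<rho>1 assms(2,3) f0 w0 _ a _ b] A_eq W_eq
          by (simp add: I_def A_def W_def)
        then have "epow I \<rho> \<le> epow (ennreal (a powr (1/\<rho>) * b powr (1 - 1/\<rho>))) \<rho>"
          by (rule epow_mono[OF \<rho>0])
        also have "\<dots> = ennreal (a * b powr (\<rho> - 1))"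
        proof -
          have "(1 - 1/\<rho>) * \<rho> = \<rho> - 1" using \<rho>1 by (simp add: field_simps)
          then show ?thesis using a b \<rho>1 by (simp add: epow_ennreal powr_mult powr_powr)
        qed
        also have "\<dots> = A * ennreal (b powr (\<rho> - 1))" using a by (simp add: A_eq ennreal_mult)
        finally show ?thesis by (simp only: I_def A_def W_def b_def)
      qed
    qed
  qed
qed

lemma sum_Holder_weighted:
  fixes b \<mu> :: "'k \<Rightarrow> real"
  assumes A: "finite A" and b: "\<And>k. k \<in> A \<Longrightarrow> 0 \<le> b k" and \<mu>: "\<And>k. k \<in> A \<Longrightarrow> 0 < \<mu> k"
    and \<rho>: "1 \<le> \<rho>"
  shows "(\<Sum>k\<in>A. b k) powr \<rho> \<le> (\<Sum>k\<in>A. b k powr \<rho> * \<mu> k powr (1-\<rho>)) * (\<Sum>k\<in>A. \<mu> k) powr (\<rho> - 1)"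
proof -
  have "epow (\<integral>\<^sup>+k. ennreal (b k) \<partial>count_space A) \<rho> \<le>
         (\<integral>\<^sup>+k. ennreal (b k powr \<rho> * \<mu> k powr (1-\<rho>)) \<partial>count_space A) *
            ennreal (enn2real (\<integral>\<^sup>+k. ennreal (\<mu> k) \<partial>count_space A) powr (\<rho> - 1))"
    using A b \<mu> \<rho> by (intro nn_integral_Holder_weighted) (auto simp: nn_integral_count_space_finite)
  moreover have "(\<integral>\<^sup>+k. ennreal (b k) \<partial>count_space A) = ennreal (\<Sum>k\<in>A. b k)"
    using A b by (simp add: nn_integral_count_space_finite sum_ennreal)
  moreover have "(\<integral>\<^sup>+k. ennreal (b k powr \<rho> * \<mu> k powr (1-\<rho>)) \<partial>count_space A)
      = ennreal (\<Sum>k\<in>A. b k powr \<rho> * \<mu> k powr (1-\<rho>))"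
    using A by (simp add: nn_integral_count_space_finite sum_ennreal)
  moreover have "(\<integral>\<^sup>+k. ennreal (\<mu> k) \<partial>count_space A) = ennreal (\<Sum>k\<in>A. \<mu> k)"
    using A \<mu> by (simp add: nn_integral_count_space_finite sum_ennreal less_imp_le)
  ultimately have "ennreal ((\<Sum>k\<in>A. b k) powr \<rho>)
      \<le> ennreal ((\<Sum>k\<in>A. b k powr \<rho> * \<mu> k powr (1-\<rho>)) * (\<Sum>k\<in>A. \<mu> k) powr (\<rho> - 1))"
    using A b \<mu> by (simp add: epow_ennreal sum_nonneg less_imp_le ennreal_mult)
  moreover have "0 \<le> (\<Sum>k\<in>A. b k powr \<rho> * \<mu> k powr (1-\<rho>)) * (\<Sum>k\<in>A. \<mu> k) powr (\<rho> - 1)"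
    by (intro mult_nonneg_nonneg sum_nonneg) auto
  ultimately show ?thesis by (simp add: ennreal_le_iff)
qed

lemma nn_integral_powr_le_finite_measure:
  fixes N :: "'a measure" and g :: "'a \<Rightarrow> real"
  assumes \<rho>: "1 \<le> \<rho>" and [measurable]: "g \<in> borel_measurable N"
    and g0: "\<And>x. x \<in> space N \<Longrightarrow> 0 \<le> g x" and fin: "emeasure N (space N) < \<top>"
  shows "epow (\<integral>\<^sup>+x. ennreal (g x) \<partial>N) \<rho> \<le>
         (\<integral>\<^sup>+x. ennreal (g x powr \<rho>) \<partial>N) * ennreal (measure N (space N) powr (\<rho> - 1))"
  using nn_integral_Holder_weighted[OF \<rho> assms(2), of "\<lambda>_. 1"] g0 fin
  by (simp add: measure_def)

section \<open>Moments of subgaussian sums\<close>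

locale subgaussian_family = prob_space M for M :: "'w measure" +
  fixes l :: "'i \<Rightarrow> 'w \<Rightarrow> real" and c :: real
  assumes indep: "indep_vars (\<lambda>_. borel) l UNIV"
    and mgf_le: "\<And>k \<gamma>. (\<integral>\<^sup>+\<omega>. ennreal (exp (\<gamma> * l k \<omega>)) \<partial>M) \<le> ennreal (exp (c * \<gamma>^2))"
begin

lemma measurable_coeff [measurable]: "l k \<in> borel_measurable M"
  using indep unfolding indep_vars_def by auto

lemma mgf_weighted_sum_le:
  assumes J: "finite J"
  shows "(\<integral>\<^sup>+\<omega>. ennreal (exp (\<gamma> * (\<Sum>k\<in>J. l k \<omega> * \<beta> k))) \<partial>M)
           \<le> ennreal (exp (c * \<gamma>^2 * (\<Sum>k\<in>J. (\<beta> k)^2)))"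
proof -
  have indJ: "indep_vars (\<lambda>_. borel) l J" using indep by (rule indep_vars_subset) auto
  have "(\<integral>\<^sup>+\<omega>. ennreal (exp (\<gamma> * (\<Sum>k\<in>J. l k \<omega> * \<beta> k))) \<partial>M)
      = (\<integral>\<^sup>+\<omega>. (\<Prod>k\<in>J. ennreal (exp ((\<gamma> * \<beta> k) * l k \<omega>))) \<partial>M)"
    by (intro nn_integral_cong) (simp add: sum_distrib_left exp_sum J prod_ennreal mult_ac)
  also have "\<dots> = (\<Prod>k\<in>J. \<integral>\<^sup>+\<omega>. ennreal (exp ((\<gamma> * \<beta> k) * l k \<omega>)) \<partial>M)"
    by (intro indep_vars_nn_integral J indep_vars_compose2[OF indJ]) auto
  also have "\<dots> \<le> (\<Prod>k\<in>J. ennreal (exp (c * (\<gamma> * \<beta> k)^2)))"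
    by (intro prod_mono_ennreal mgf_le)
  also have "\<dots> = ennreal (exp (c * \<gamma>^2 * (\<Sum>k\<in>J. (\<beta> k)^2)))"
    by (simp add: prod_ennreal exp_sum[OF J, symmetric] sum_distrib_left power_mult_distrib mult_ac)
  finally show ?thesis .
qed

lemma Khintchine_real:
  assumes J: "finite J" and r: "r > 0"
  shows "(\<integral>\<^sup>+\<omega>. ennreal (\<bar>\<Sum>k\<in>J. l k \<omega> * \<beta> k\<bar> powr r) \<partial>M)
           \<le> ennreal (2 * (exp c * sqrt r * sqrt (\<Sum>k\<in>J. (\<beta> k)^2)) powr r)"
proof -
  define \<tau> where "\<tau> = sqrt (\<Sum>k\<in>J. (\<beta> k)^2)"
  have \<tau>0: "\<tau> \<ge> 0" by (simp add: \<tau>_def sum_nonneg)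
  show ?thesis
  proof (cases "\<tau> = 0")
    case True
    then have "\<forall>k\<in>J. \<beta> k = 0" using J by (simp add: \<tau>_def sum_nonneg_eq_0_iff)
    then show ?thesis using r by simp
  next
    case False
    then have \<tau>: "\<tau> > 0" using \<tau>0 by auto
    \<comment> \<open>\<open>\<bar>Z\<bar> powr r\<close> is bounded by the exponential moments at \<open>\<plusminus>g\<close>;
        the choice \<open>g = \<surd>r / \<tau>\<close> yields the factor \<open>\<surd>r\<close>\<close>
    define g where "g = sqrt r / \<tau>"
    have g: "g > 0" using \<tau> r by (simp add: g_def)
    define Z where "Z \<omega> = (\<Sum>k\<in>J. l k \<omega> * \<beta> k)" for \<omega>
    define D where "D = (r / (exp 1 * g)) powr r"
    have D: "D \<ge> 0" by (simp add: D_def)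
    have pointwise: "\<bar>Z \<omega>\<bar> powr r \<le> D * (exp (g * Z \<omega>) + exp ((-g) * Z \<omega>))" for \<omega>
    proof -
      have "g powr r * \<bar>Z \<omega>\<bar> powr r \<le> (r / exp 1) powr r * exp (g * \<bar>Z \<omega>\<bar>)"
        using powr_le_exp[of "g * \<bar>Z \<omega>\<bar>" r] g r by (simp add: powr_mult)
      also have "exp (g * \<bar>Z \<omega>\<bar>) \<le> exp (g * Z \<omega>) + exp ((-g) * Z \<omega>)"
        by (cases "Z \<omega> \<ge> 0") (auto simp: add_increasing add_increasing2)
      finally have "g powr r * \<bar>Z \<omega>\<bar> powr r \<le> (r / exp 1) powr r * (exp (g * Z \<omega>) + exp ((-g) * Z \<omega>))"
        by (simp add: mult_left_mono)
      then show ?thesis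
        using g r by (simp add: D_def powr_divide powr_mult field_simps)
    qed
    have "(\<integral>\<^sup>+\<omega>. ennreal (\<bar>Z \<omega>\<bar> powr r) \<partial>M)
        \<le> (\<integral>\<^sup>+\<omega>. ennreal D * (ennreal (exp (g * Z \<omega>)) + ennreal (exp ((-g) * Z \<omega>))) \<partial>M)"
      using pointwise D by (intro nn_integral_mono)
        (simp add: ennreal_mult[symmetric] ennreal_plus[symmetric] ennreal_leI del: ennreal_plus)
    also have "\<dots> = ennreal D * ((\<integral>\<^sup>+\<omega>. ennreal (exp (g * Z \<omega>)) \<partial>M) + (\<integral>\<^sup>+\<omega>. ennreal (exp ((-g) * Z \<omega>)) \<partial>M))"
      by (simp add: Z_def nn_integral_cmult nn_integral_add)
    also have "\<dots> \<le> ennreal D * (ennreal (exp (c * g^2 * \<tau>^2)) + ennreal (exp (c * (-g)^2 * \<tau>^2)))"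
      unfolding Z_def \<tau>_def using mgf_weighted_sum_le[OF J, of g \<beta>] mgf_weighted_sum_le[OF J, of "-g" \<beta>]
      by (intro mult_left_mono add_mono) (auto simp: sum_nonneg)
    also have "\<dots> = ennreal (2 * D * exp (c * r))"
      using g \<tau> r D by (simp add: g_def ennreal_mult[symmetric] ennreal_plus[symmetric] power_divide del: ennreal_plus)
    also have "2 * D * exp (c * r) \<le> 2 * (exp c * sqrt r * \<tau>) powr r"
    proof -
      have "r / (exp 1 * g) = sqrt r * \<tau> / exp 1"
        using r \<tau> by (simp add: g_def field_simps flip: real_sqrt_mult)
      then have "D = (sqrt r * \<tau> / exp 1) powr r" unfolding D_def by simp
      also have "\<dots> \<le> (sqrt r * \<tau>) powr r" using r \<tau>
        by (intro powr_mono2) (auto simp: divide_le_eq mult_nonneg_nonneg)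
      finally have "D * exp (c * r) \<le> (sqrt r * \<tau>) powr r * (exp c) powr r"
        using r by (simp add: powr_def mult_right_mono mult_ac)
      also have "\<dots> = (exp c * sqrt r * \<tau>) powr r" using \<tau> r by (simp add: powr_mult mult_ac)
      finally show ?thesis by simp
    qed
    finally show ?thesis unfolding Z_def \<tau>_def by (simp add: ennreal_leI)
  qed
qed

end

lemma norm_le_sum_abs_Re_Im:
  fixes z :: "complex^'n"
  shows "norm z \<le> (\<Sum>i\<in>(UNIV::('n \<times> bool) set). \<bar>if snd i then Im (z $ fst i) else Re (z $ fst i)\<bar>)"
proof -
  have "norm z \<le> (\<Sum>j\<in>UNIV. norm (z $ j))" unfolding norm_vec_def by (rule L2_set_le_sum) auto
  also have "\<dots> \<le> (\<Sum>j\<in>UNIV. \<bar>Re (z $ j)\<bar> + \<bar>Im (z $ j)\<bar>)"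
    by (intro sum_mono cmod_le)
  also have "\<dots> = (\<Sum>j\<in>UNIV. \<Sum>b\<in>(UNIV::bool set). \<bar>if b then Im (z $ j) else Re (z $ j)\<bar>)"
    by (simp add: UNIV_bool add.commute)
  also have "\<dots> = (\<Sum>i\<in>(UNIV \<times> UNIV). \<bar>if snd i then Im (z $ fst i) else Re (z $ fst i)\<bar>)"
    by (subst sum.cartesian_product') (simp only: fst_conv snd_conv)
  finally show ?thesis by simp
qed

context subgaussian_family
begin

lemma Khintchine_vec:
  fixes v :: "'i \<Rightarrow> complex^3"
  assumes J: "finite J" and r: "r \<ge> 1"
  shows "(\<integral>\<^sup>+\<omega>. ennreal (norm (\<Sum>k\<in>J. l k \<omega> *\<^sub>R v k) powr r) \<partial>M)
           \<le> ennreal ((72 * exp c * sqrt r * sqrt (\<Sum>k\<in>J. (norm (v k))^2)) powr r)"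
proof -
  define I where "I = (UNIV::(3 \<times> bool) set)"
  have card_I: "card I = 6" unfolding I_def by (simp add: card_UNIV_bool)
  define \<beta> where "\<beta> i k = (if snd i then Im (v k $ fst i) else Re (v k $ fst i))" for i :: "3 \<times> bool" and k
  define Z where "Z i \<omega> = \<bar>\<Sum>k\<in>J. l k \<omega> * \<beta> i k\<bar>" for i \<omega>
  define \<sigma> where "\<sigma> = sqrt (\<Sum>k\<in>J. (norm (v k))^2)"
  have r0: "r > 0" using r by auto
  have pointwise: "norm (\<Sum>k\<in>J. l k \<omega> *\<^sub>R v k) powr r \<le> 6 powr r * (\<Sum>i\<in>I. Z i \<omega> powr r)" for \<omega>
  proof -
    have "(if snd i then Im ((\<Sum>k\<in>J. l k \<omega> *\<^sub>R v k) $ fst i) else Re ((\<Sum>k\<in>J. l k \<omega> *\<^sub>R v k) $ fst i))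
        = (\<Sum>k\<in>J. l k \<omega> * \<beta> i k)" for i
      by (simp add: \<beta>_def sum_component Re_sum Im_sum)
    then have "norm (\<Sum>k\<in>J. l k \<omega> *\<^sub>R v k) \<le> (\<Sum>i\<in>I. Z i \<omega>)"
      using norm_le_sum_abs_Re_Im[of "\<Sum>k\<in>J. l k \<omega> *\<^sub>R v k"] by (simp add: I_def Z_def)
    then have "norm (\<Sum>k\<in>J. l k \<omega> *\<^sub>R v k) powr r \<le> (\<Sum>i\<in>I. Z i \<omega>) powr r"
      using r0 by (intro powr_mono2) auto
    also have "\<dots> \<le> real (card I) powr r * (\<Sum>i\<in>I. Z i \<omega> powr r)"
      using r0 by (intro powr_sum_le_card_powr_sum) (auto simp: I_def Z_def)
    finally show ?thesis by (simp add: card_I)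
  qed
  have \<beta>_le: "sqrt (\<Sum>k\<in>J. (\<beta> i k)^2) \<le> \<sigma>" for i
    unfolding \<sigma>_def
  proof (intro real_sqrt_le_mono sum_mono)
    fix k
    have "\<bar>\<beta> i k\<bar> \<le> norm (v k $ fst i)" by (auto simp: \<beta>_def abs_Re_le_cmod abs_Im_le_cmod)
    also have "\<dots> \<le> norm (v k)" by (rule Finite_Cartesian_Product.norm_nth_le)
    finally show "(\<beta> i k)^2 \<le> (norm (v k))^2"
      by (metis abs_ge_zero power2_abs power_mono)
  qed
  have "(\<integral>\<^sup>+\<omega>. ennreal (norm (\<Sum>k\<in>J. l k \<omega> *\<^sub>R v k) powr r) \<partial>M)
      \<le> (\<integral>\<^sup>+\<omega>. ennreal (6 powr r) * (\<Sum>i\<in>I. ennreal (Z i \<omega> powr r)) \<partial>M)"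
    using pointwise by (intro nn_integral_mono) (simp add: ennreal_mult[symmetric] sum_ennreal sum_nonneg ennreal_leI)
  also have "\<dots> = ennreal (6 powr r) * (\<Sum>i\<in>I. (\<integral>\<^sup>+\<omega>. ennreal (Z i \<omega> powr r) \<partial>M))"
    by (simp add: Z_def nn_integral_cmult nn_integral_sum del: sum_ennreal)
  also have "\<dots> \<le> ennreal (6 powr r) * (\<Sum>i\<in>I. ennreal (2 * (exp c * sqrt r * \<sigma>) powr r))"
  proof (intro mult_left_mono sum_mono)
    fix i
    have "(\<integral>\<^sup>+\<omega>. ennreal (Z i \<omega> powr r) \<partial>M) \<le> ennreal (2 * (exp c * sqrt r * sqrt (\<Sum>k\<in>J. (\<beta> i k)^2)) powr r)"
      unfolding Z_def by (rule Khintchine_real[OF J r0])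
    also have "\<dots> \<le> ennreal (2 * (exp c * sqrt r * \<sigma>) powr r)"
      using \<beta>_le[of i] r0 by (intro ennreal_leI mult_left_mono powr_mono2) (auto intro!: mult_nonneg_nonneg sum_nonneg)
    finally show "(\<integral>\<^sup>+\<omega>. ennreal (Z i \<omega> powr r) \<partial>M) \<le> ennreal (2 * (exp c * sqrt r * \<sigma>) powr r)" .
  qed auto
  also have "\<dots> = ennreal (12 * 6 powr r * (exp c * sqrt r * \<sigma>) powr r)"
    by (simp add: card_I ennreal_mult[symmetric] numeral_mult_ennreal mult_ac)
  also have "12 * 6 powr r * (exp c * sqrt r * \<sigma>) powr r \<le> 12 powr r * 6 powr r * (exp c * sqrt r * \<sigma>) powr r"
    using powr_mono[of 1 r "12::real"] r by (intro mult_right_mono) auto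
  also have "\<dots> = (72 * exp c * sqrt r * \<sigma>) powr r"
    by (simp add: powr_mult[symmetric] \<sigma>_def mult_ac)
  finally show ?thesis unfolding \<sigma>_def by (simp add: ennreal_leI)
qed

end

section \<open>Time integrals of the heat factors\<close>

lemma nn_integral_exp_neg_le:
  assumes "\<mu> > 0"
  shows "(\<integral>\<^sup>+t. ennreal (exp (-\<mu>*t)) * indicator {0<..<T} t \<partial>lborel) \<le> ennreal (1/\<mu>)"
proof -
  have "(\<integral>\<^sup>+t. ennreal (exp (-\<mu>*t)) * indicator {0<..<T} t \<partial>lborel)
      \<le> (\<integral>\<^sup>+t. ennreal (1/\<mu>) * (ennreal (erlang_density 0 \<mu> t) * indicator {..T} t) \<partial>lborel)"
    using assms by (intro nn_integral_mono)
      (auto simp: exponential_density_def ennreal_mult[symmetric] mult_ac split: split_indicator)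
  also have "\<dots> = ennreal (1/\<mu>) * ennreal (erlang_CDF 0 \<mu> T)"
    using assms by (simp add: nn_integral_cmult nn_integral_erlang_density)
  also have "\<dots> \<le> ennreal (1/\<mu>) * 1"
    using assms by (intro mult_left_mono) (auto simp: erlang_CDF_0)
  finally show ?thesis by simp
qed

lemma nn_integral_powr_exp_neg_le:
  assumes \<beta>: "\<beta> > 0" and \<mu>: "\<mu> > 0"
  shows "(\<integral>\<^sup>+t. ennreal (t powr \<beta> * exp (-\<mu>*t)) * indicator {0<..<T} t \<partial>lborel)
           \<le> ennreal ((2*\<beta>/exp 1) powr \<beta> * 2 * \<mu> powr (-(\<beta>+1)))"
proof -
  define C where "C = (2*\<beta>/exp 1) powr \<beta> * \<mu> powr (-\<beta>)"
  have C: "C \<ge> 0" by (simp add: C_def)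
  \<comment> \<open>half of the exponential decay absorbs the power of \<open>t\<close>\<close>
  have pointwise: "t powr \<beta> * exp (-\<mu>*t) \<le> C * exp (-(\<mu>/2)*t)" if "t > 0" for t
  proof -
    have "(\<mu>*t/2) powr \<beta> = (\<mu>/2) powr \<beta> * t powr \<beta>"
      using that \<mu> by (simp add: powr_mult[symmetric])
    then have "(\<mu>/2) powr \<beta> * t powr \<beta> \<le> (\<beta>/exp 1) powr \<beta> * exp (\<mu>*t/2)"
      using powr_le_exp[of "\<mu>*t/2" \<beta>] that \<mu> \<beta> by simp
    then have "t powr \<beta> \<le> C * exp (\<mu>*t/2)"
      using \<mu> \<beta> by (simp add: C_def powr_divide powr_minus_divide powr_mult field_simps)
    then have "t powr \<beta> * exp (-\<mu>*t) \<le> C * exp (\<mu>*t/2) * exp (-\<mu>*t)"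
      by (intro mult_right_mono) auto
    also have "\<dots> = C * exp (-(\<mu>/2)*t)"
      by (simp add: mult.assoc flip: exp_add)
    finally show ?thesis .
  qed
  have "(\<integral>\<^sup>+t. ennreal (t powr \<beta> * exp (-\<mu>*t)) * indicator {0<..<T} t \<partial>lborel)
      \<le> (\<integral>\<^sup>+t. ennreal C * (ennreal (exp (-(\<mu>/2)*t)) * indicator {0<..<T} t) \<partial>lborel)"
    using pointwise C by (intro nn_integral_mono) (auto simp: ennreal_mult[symmetric] ennreal_leI split: split_indicator)
  also have "\<dots> = ennreal C * (\<integral>\<^sup>+t. ennreal (exp (-(\<mu>/2)*t)) * indicator {0<..<T} t \<partial>lborel)"
    by (intro nn_integral_cmult) auto
  also have "\<dots> \<le> ennreal C * ennreal (1/(\<mu>/2))"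
    using \<mu> by (intro mult_left_mono nn_integral_exp_neg_le) auto
  also have "\<dots> = ennreal ((2*\<beta>/exp 1) powr \<beta> * 2 * \<mu> powr (-(\<beta>+1)))"
  proof -
    have "\<mu> powr (-(\<beta>+1)) = \<mu> powr (-\<beta>) * \<mu> powr (-1)"
      by (subst powr_add[symmetric]) (simp add: algebra_simps)
    then show ?thesis
      using C \<mu> by (simp add: C_def ennreal_mult[symmetric] powr_minus_divide field_simps)
  qed
  finally show ?thesis .
qed

lemma ksq_nonneg: "0 \<le> ksq k"
  by (simp add: ksq_def sum_nonneg)

lemma one_plus_ksq_pos [simp]: "0 < 1 + ksq k"
  using ksq_nonneg[of k] by linarith

lemma one_le_ksq:
  assumes "k \<noteq> 0"
  shows "1 \<le> ksq k"
proof -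
  obtain i where i: "k $ i \<noteq> 0" using assms by (metis vec_eq_iff zero_index)
  then have "1 \<le> (real_of_int (k $ i))^2"
    by (metis of_int_0_eq_iff of_int_1_le_iff of_int_power one_le_power zero_less_abs_iff abs_square_eq_1 power2_abs
        int_one_le_iff_zero_less less_one not_le one_le_power le_square)
  also have "\<dots> \<le> ksq k" unfolding ksq_def by (rule member_le_sum) auto
  finally show ?thesis .
qed

definition heat_time_const :: "real \<Rightarrow> real \<Rightarrow> real \<Rightarrow> real \<Rightarrow> real" where
  "heat_time_const \<alpha> \<eta> q T = max (T powr (\<eta>*q+1))
      ((2*(\<eta>*q)/exp 1) powr (\<eta>*q) * 2 * q powr (-(\<eta>*q+1)) * 2 powr (\<alpha>*(\<eta>*q+1)))"

lemma heat_time_const_pos: "T > 0 \<Longrightarrow> 0 < heat_time_const \<alpha> \<eta> q T"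
  unfolding heat_time_const_def by (simp add: less_max_iff_disj)

lemma nn_integral_heat_weight_le:
  assumes \<alpha>: "\<alpha> > 0" and \<eta>: "\<eta> > 0" and q: "q > 0" and T: "T > 0"
  shows "(\<integral>\<^sup>+t. ennreal (t powr (\<eta>*q) * exp (-(q * ksq k powr \<alpha>) * t)) * indicator {0<..<T} t \<partial>lborel)
          \<le> ennreal (heat_time_const \<alpha> \<eta> q T * (1 + ksq k) powr (-(\<alpha>*(\<eta>*q+1))))"
proof (cases "k = 0")
  case True
  then have ksq: "ksq k = 0" by (simp add: ksq_def)
  have "(\<integral>\<^sup>+t. ennreal (t powr (\<eta>*q) * exp (-(q * ksq k powr \<alpha>) * t)) * indicator {0<..<T} t \<partial>lborel)
      \<le> (\<integral>\<^sup>+t. ennreal (T powr (\<eta>*q)) * indicator {0<..<T} t \<partial>lborel)"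
    using \<alpha> \<eta> q by (intro nn_integral_mono) (auto simp: ksq split: split_indicator intro!: ennreal_leI powr_mono2)
  also have "\<dots> = ennreal (T powr (\<eta>*q+1))"
    using T by (simp add: nn_integral_cmult_indicator powr_add ennreal_mult[symmetric])
  also have "\<dots> \<le> ennreal (heat_time_const \<alpha> \<eta> q T * (1 + ksq k) powr (-(\<alpha>*(\<eta>*q+1))))"
    by (simp add: ksq heat_time_const_def ennreal_leI)
  finally show ?thesis .
next
  case False
  define \<beta> where "\<beta> = \<eta>*q"
  define L where "L = ksq k powr \<alpha>"
  have \<beta>: "\<beta> > 0" using \<eta> q by (simp add: \<beta>_def)
  have k1: "1 \<le> ksq k" using False by (rule one_le_ksq)
  have L: "1 \<le> L" using k1 \<alpha> by (simp add: L_def ge_one_powr_ge_zero)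
  have "L powr (-(\<beta>+1)) = ksq k powr (-(\<alpha>*(\<beta>+1)))"
    unfolding L_def by (simp add: powr_powr algebra_simps)
  also have "\<dots> \<le> ((1 + ksq k)/2) powr (-(\<alpha>*(\<beta>+1)))"
    using k1 \<alpha> \<beta> by (intro powr_mono2') (auto intro: mult_nonneg_nonneg)
  also have "\<dots> = 2 powr (\<alpha>*(\<beta>+1)) * (1 + ksq k) powr (-(\<alpha>*(\<beta>+1)))"
    by (simp add: powr_divide powr_minus_divide)
  finally have L_le: "L powr (-(\<beta>+1)) \<le> 2 powr (\<alpha>*(\<beta>+1)) * (1 + ksq k) powr (-(\<alpha>*(\<beta>+1)))" .
  have "(\<integral>\<^sup>+t. ennreal (t powr (\<eta>*q) * exp (-(q * ksq k powr \<alpha>) * t)) * indicator {0<..<T} t \<partial>lborel)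
      \<le> ennreal ((2*\<beta>/exp 1) powr \<beta> * 2 * (q*L) powr (-(\<beta>+1)))"
    unfolding \<beta>_def[symmetric] L_def[symmetric] using q L by (intro nn_integral_powr_exp_neg_le \<beta>) simp
  also have "\<dots> \<le> ennreal (heat_time_const \<alpha> \<eta> q T * (1 + ksq k) powr (-(\<alpha>*(\<eta>*q+1))))"
  proof (rule ennreal_leI)
    have "(2*\<beta>/exp 1) powr \<beta> * 2 * (q*L) powr (-(\<beta>+1))
        = (2*\<beta>/exp 1) powr \<beta> * 2 * q powr (-(\<beta>+1)) * L powr (-(\<beta>+1))"
      using q L by (simp add: powr_mult)
    also have "\<dots> \<le> (2*\<beta>/exp 1) powr \<beta> * 2 * q powr (-(\<beta>+1)) * (2 powr (\<alpha>*(\<beta>+1)) * (1 + ksq k) powr (-(\<alpha>*(\<beta>+1))))"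
      using L_le by (intro mult_left_mono) auto
    also have "\<dots> \<le> heat_time_const \<alpha> \<eta> q T * (1 + ksq k) powr (-(\<alpha>*(\<eta>*q+1)))"
      unfolding heat_time_const_def \<beta>_def mult.assoc[symmetric, of _ "2 powr _"]
      by (intro mult_right_mono) auto
    finally show "(2*\<beta>/exp 1) powr \<beta> * 2 * (q*L) powr (-(\<beta>+1))
        \<le> heat_time_const \<alpha> \<eta> q T * (1 + ksq k) powr (-(\<alpha>*(\<eta>*q+1)))" .
  qed
  finally show ?thesis .
qed

definition heat_variance :: "real \<Rightarrow> (int^3 \<Rightarrow> complex^3) \<Rightarrow> (int^3) set \<Rightarrow> real \<Rightarrow> real" where
  "heat_variance \<alpha> a J t = (\<Sum>k\<in>J. (exp (-t * ksq k powr \<alpha>))^2 * (norm (a k))^2)"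

lemma heat_variance_powr_le:
  assumes J: "finite J" and nz: "\<And>k. k \<in> J \<Longrightarrow> a k \<noteq> 0" and \<rho>: "1 \<le> \<rho>"
  shows "heat_variance \<alpha> a J t powr \<rho> \<le>
    (\<Sum>k\<in>J. (1 + ksq k) powr s * (norm (a k))^2) powr (\<rho> - 1) *
    (\<Sum>k\<in>J. (norm (a k))^2 * (1 + ksq k) powr (s * (1-\<rho>)) * exp (-(2*\<rho> * ksq k powr \<alpha>) * t))"
proof -
  have "heat_variance \<alpha> a J t powr \<rho> \<le>
      (\<Sum>k\<in>J. ((exp (-t * ksq k powr \<alpha>))^2 * (norm (a k))^2) powr \<rho> *
               ((1 + ksq k) powr s * (norm (a k))^2) powr (1-\<rho>)) *
      (\<Sum>k\<in>J. (1 + ksq k) powr s * (norm (a k))^2) powr (\<rho> - 1)"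
    unfolding heat_variance_def using J nz \<rho>
    by (intro sum_Holder_weighted) (auto intro!: mult_pos_pos simp: less_imp_neq[OF one_plus_ksq_pos, symmetric])
  also have "(\<Sum>k\<in>J. ((exp (-t * ksq k powr \<alpha>))^2 * (norm (a k))^2) powr \<rho> *
               ((1 + ksq k) powr s * (norm (a k))^2) powr (1-\<rho>))
      = (\<Sum>k\<in>J. (norm (a k))^2 * (1 + ksq k) powr (s * (1-\<rho>)) * exp (-(2*\<rho> * ksq k powr \<alpha>) * t))"
  proof (intro sum.cong refl)
    fix k assume "k \<in> J"
    then have n: "norm (a k) > 0" using nz by simp
    define x where "x = -t * ksq k powr \<alpha>"
    have "((exp x)^2 * (norm (a k))^2) powr \<rho> = exp (x * (2*\<rho>)) * norm (a k) powr (2*\<rho>)"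
      using n by (simp add: powr_mult powr_powr exp_powr_real flip: powr_numeral)
    moreover have "((1 + ksq k) powr s * (norm (a k))^2) powr (1-\<rho>)
        = (1 + ksq k) powr (s * (1-\<rho>)) * norm (a k) powr (2*(1-\<rho>))"
      using n by (simp add: powr_mult powr_powr flip: powr_numeral)
    moreover have "norm (a k) powr (2*\<rho>) * norm (a k) powr (2*(1-\<rho>)) = (norm (a k))^2"
      using n by (simp add: powr_add[symmetric] algebra_simps flip: powr_numeral)
    ultimately show "((exp x)^2 * (norm (a k))^2) powr \<rho> * ((1 + ksq k) powr s * (norm (a k))^2) powr (1-\<rho>)
        = (norm (a k))^2 * (1 + ksq k) powr (s * (1-\<rho>)) * exp (-(2*\<rho> * ksq k powr \<alpha>) * t)"
      by (simp add: x_def mult_ac)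
  qed
  finally show ?thesis by (simp add: mult_ac)
qed

lemma Sobolev_weight_exponent_le:
  assumes q: "0 < q" and s: "- 2 * \<alpha> * \<eta> - 2 * \<alpha> / q \<le> s"
  shows "(1 + ksq k) powr (s * (1 - q/2)) * (1 + ksq k) powr (-(\<alpha>*(\<eta>*q+1))) \<le> (1 + ksq k) powr s"
proof -
  have "(- 2 * \<alpha> * \<eta> - 2 * \<alpha> / q) * (q/2) \<le> s * (q/2)" using s q by (intro mult_right_mono) auto
  moreover have "(- 2 * \<alpha> * \<eta> - 2 * \<alpha> / q) * (q/2) = -(\<alpha>*(\<eta>*q+1))" using q by (simp add: field_simps)
  ultimately have "s * (1 - q/2) - \<alpha>*(\<eta>*q+1) \<le> s" by (simp add: algebra_simps)
  then show ?thesis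
    using powr_mono[of "s * (1 - q/2) - \<alpha>*(\<eta>*q+1)" s "1 + ksq k"] ksq_nonneg[of k]
    by (simp add: powr_add[symmetric])
qed

lemma nn_integral_heat_variance_le:
  assumes \<alpha>: "\<alpha> > 0" and \<eta>: "\<eta> > 0" and q: "2 \<le> q" and T: "T > 0"
    and s: "- 2 * \<alpha> * \<eta> - 2 * \<alpha> / q \<le> s" and J: "finite J" and H: "in_Hs s a"
  shows "(\<integral>\<^sup>+t. ennreal (t powr (\<eta>*q) * heat_variance \<alpha> a J t powr (q/2)) * indicator {0<..<T} t \<partial>lborel)
           \<le> ennreal (heat_time_const \<alpha> \<eta> q T * Hs_norm s a powr q)"
proof -
  define J' where "J' = {k\<in>J. a k \<noteq> 0}"
  define \<rho> where "\<rho> = q/2"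
  define C1 where "C1 = heat_time_const \<alpha> \<eta> q T"
  define S where "S = (\<Sum>\<^sub>\<infinity>k. (1 + ksq k) powr s * (norm (a k))^2)"
  define u where "u k = (1 + ksq k) powr s * (norm (a k))^2" for k
  define Lam where "Lam = (\<Sum>k\<in>J'. u k)"
  define ck where "ck k = (norm (a k))^2 * (1 + ksq k) powr (s * (1-\<rho>))" for k
  define g where "g k t = t powr (\<eta>*q) * exp (-(q * ksq k powr \<alpha>) * t)" for k t
  have J': "finite J'" using J by (simp add: J'_def)
  have \<rho>: "1 \<le> \<rho>" using q by (simp add: \<rho>_def)
  have C1: "0 < C1" using T by (simp add: C1_def heat_time_const_pos)
  have Lam0: "0 \<le> Lam" unfolding Lam_def u_def by (intro sum_nonneg) auto
  have Lam_S: "Lam \<le> S"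
    unfolding Lam_def S_def u_def using H J' by (intro finite_sum_le_infsum) (auto simp: in_Hs_def J'_def)
  have pointwise: "t powr (\<eta>*q) * heat_variance \<alpha> a J t powr \<rho> \<le> (\<Sum>k\<in>J'. Lam powr (\<rho>-1) * ck k * g k t)" for t
  proof -
    have "heat_variance \<alpha> a J t = heat_variance \<alpha> a J' t"
      unfolding heat_variance_def using J by (intro sum.mono_neutral_right) (auto simp: J'_def)
    then have "heat_variance \<alpha> a J t powr \<rho> \<le> Lam powr (\<rho> - 1) * (\<Sum>k\<in>J'. ck k * exp (-(q * ksq k powr \<alpha>) * t))"
      using heat_variance_powr_le[OF J' _ \<rho>, of a \<alpha> t s] by (simp add: J'_def Lam_def u_def ck_def \<rho>_def)
    then have "t powr (\<eta>*q) * heat_variance \<alpha> a J t powr \<rho>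
        \<le> t powr (\<eta>*q) * (Lam powr (\<rho> - 1) * (\<Sum>k\<in>J'. ck k * exp (-(q * ksq k powr \<alpha>) * t)))"
      by (rule mult_left_mono) simp
    also have "\<dots> = (\<Sum>k\<in>J'. Lam powr (\<rho>-1) * ck k * g k t)"
      by (simp add: g_def sum_distrib_left mult_ac)
    finally show ?thesis .
  qed
  have weight_le: "ck k * (1 + ksq k) powr (-(\<alpha>*(\<eta>*q+1))) \<le> u k" for k
  proof -
    have "(norm (a k))^2 * ((1 + ksq k) powr (s * (1-\<rho>)) * (1 + ksq k) powr (-(\<alpha>*(\<eta>*q+1))))
        \<le> (norm (a k))^2 * (1 + ksq k) powr s"
      using Sobolev_weight_exponent_le[of q \<alpha> \<eta> s k] q s by (intro mult_left_mono) (auto simp: \<rho>_def)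
    then show ?thesis by (simp add: ck_def u_def mult_ac)
  qed
  have "(\<integral>\<^sup>+t. ennreal (t powr (\<eta>*q) * heat_variance \<alpha> a J t powr (q/2)) * indicator {0<..<T} t \<partial>lborel)
      \<le> (\<integral>\<^sup>+t. (\<Sum>k\<in>J'. ennreal (Lam powr (\<rho>-1) * ck k) * (ennreal (g k t) * indicator {0<..<T} t)) \<partial>lborel)"
  proof (intro nn_integral_mono)
    fix t
    have "ennreal (t powr (\<eta>*q) * heat_variance \<alpha> a J t powr (q/2)) \<le> ennreal (\<Sum>k\<in>J'. Lam powr (\<rho>-1) * ck k * g k t)"
      using pointwise[of t] unfolding \<rho>_def by (rule ennreal_leI)
    also have "\<dots> = (\<Sum>k\<in>J'. ennreal (Lam powr (\<rho>-1) * ck k) * ennreal (g k t))"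
      by (simp add: g_def ck_def ennreal_mult sum_ennreal[symmetric] sum_nonneg del: sum_ennreal)
    finally show "ennreal (t powr (\<eta>*q) * heat_variance \<alpha> a J t powr (q/2)) * indicator {0<..<T} t
        \<le> (\<Sum>k\<in>J'. ennreal (Lam powr (\<rho>-1) * ck k) * (ennreal (g k t) * indicator {0<..<T} t))"
      by (auto simp: sum_distrib_right mult_ac split: split_indicator)
  qed
  also have "\<dots> = (\<Sum>k\<in>J'. ennreal (Lam powr (\<rho>-1) * ck k) * (\<integral>\<^sup>+t. ennreal (g k t) * indicator {0<..<T} t \<partial>lborel))"
    by (simp add: g_def nn_integral_sum nn_integral_cmult)
  also have "\<dots> \<le> (\<Sum>k\<in>J'. ennreal (Lam powr (\<rho>-1) * ck k) * ennreal (C1 * (1 + ksq k) powr (-(\<alpha>*(\<eta>*q+1)))))"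
    unfolding g_def C1_def using \<alpha> \<eta> q T by (intro sum_mono mult_left_mono nn_integral_heat_weight_le) auto
  also have "\<dots> = ennreal (\<Sum>k\<in>J'. Lam powr (\<rho>-1) * C1 * (ck k * (1 + ksq k) powr (-(\<alpha>*(\<eta>*q+1)))))"
    using C1 by (simp add: ck_def ennreal_mult[symmetric] sum_ennreal mult_ac)
  also have "\<dots> \<le> ennreal (\<Sum>k\<in>J'. Lam powr (\<rho>-1) * C1 * u k)"
    using C1 weight_le by (intro ennreal_leI sum_mono mult_left_mono) auto
  also have "(\<Sum>k\<in>J'. Lam powr (\<rho>-1) * C1 * u k) = Lam powr (\<rho>-1) * C1 * Lam"
    unfolding Lam_def by (rule sum_distrib_left[symmetric])
  also have "Lam powr (\<rho>-1) * Lam \<le> Hs_norm s a powr q"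
  proof (cases "Lam = 0")
    case True
    then show ?thesis by simp
  next
    case False
    then have "Lam powr (\<rho>-1) * Lam = Lam powr \<rho>" using Lam0 by (simp add: powr_diff)
    also have "\<dots> \<le> S powr \<rho>" using Lam_S Lam0 \<rho> by (intro powr_mono2) auto
    also have "\<dots> = Hs_norm s a powr q"
      using Lam0 Lam_S by (simp add: Hs_norm_def S_def[symmetric] \<rho>_def powr_half_sqrt[symmetric] powr_powr)
    finally show ?thesis .
  qed
  then have "ennreal (Lam powr (\<rho>-1) * C1 * Lam) \<le> ennreal (C1 * Hs_norm s a powr q)"
    using C1 by (intro ennreal_leI) (simp add: mult_left_mono mult_ac)
  finally show ?thesis by (simp add: C1_def)
qed

lemma heat_variance_pos:
  assumes "finite J" "k \<in> J" "a k \<noteq> 0"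
  shows "0 < heat_variance \<alpha> a J t"
proof -
  have "0 < (exp (-t * ksq k powr \<alpha>))^2 * (norm (a k))^2" using assms by simp
  also have "\<dots> \<le> heat_variance \<alpha> a J t" unfolding heat_variance_def using assms by (intro member_le_sum) auto
  finally show ?thesis .
qed

definition free_mode :: "real \<Rightarrow> (int^3 \<Rightarrow> complex^3) \<Rightarrow> real \<Rightarrow> real^3 \<Rightarrow> int^3 \<Rightarrow> complex^3" where
  "free_mode \<alpha> a t x k = (\<chi> j. complex_of_real (exp (- t * ksq k powr \<alpha>)) * cis (kdot k x) * (a k $ j))"

definition free_evol_partial ::
  "real \<Rightarrow> (int^3 \<Rightarrow> complex^3) \<Rightarrow> (int^3 \<Rightarrow> 'w \<Rightarrow> real) \<Rightarrow> (int^3) set \<Rightarrow> 'w \<Rightarrow> real \<Rightarrow> real^3 \<Rightarrow> complex^3"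
  where "free_evol_partial \<alpha> a l J \<omega> t x = (\<Sum>k\<in>J. l k \<omega> *\<^sub>R free_mode \<alpha> a t x k)"

lemma free_evol_eq_infsum: "free_evol \<alpha> a l \<omega> t x = (\<Sum>\<^sub>\<infinity>k. l k \<omega> *\<^sub>R free_mode \<alpha> a t x k)"
  unfolding free_evol_def free_mode_def
  by (intro infsum_cong) (simp add: vec_eq_iff, simp add: scaleR_conv_of_real mult_ac)

lemma free_evol_partial_nth:
  "free_evol_partial \<alpha> a l J \<omega> t x $ j
     = (\<Sum>k\<in>J. complex_of_real (l k \<omega> * exp (- t * ksq k powr \<alpha>)) * cis (kdot k x) * (a k $ j))"
  by (simp add: free_evol_partial_def free_mode_def sum_component, simp add: scaleR_conv_of_real mult_ac)

lemma norm_vec_eq_sqrt_sum: "norm z = sqrt (\<Sum>j\<in>UNIV. (norm (z $ j))^2)"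
  by (simp add: norm_vec_def L2_set_def)

lemma norm_free_mode: "norm (free_mode \<alpha> a t x k) = exp (- t * ksq k powr \<alpha>) * norm (a k)"
  unfolding free_mode_def norm_vec_eq_sqrt_sum[of "a k"]
  by (simp add: norm_vec_eq_sqrt_sum norm_mult power_mult_distrib sum_distrib_left[symmetric] real_sqrt_mult)

lemma heat_variance_eq_sum_norm_free_mode:
  "heat_variance \<alpha> a J t = (\<Sum>k\<in>J. (norm (free_mode \<alpha> a t x k))^2)"
  by (simp add: heat_variance_def norm_free_mode power_mult_distrib)

lemma norm_free_evol_partial_le:
  "norm (free_evol_partial \<alpha> a l J \<omega> t x) \<le> (\<Sum>k\<in>J. \<bar>l k \<omega>\<bar> * (exp (- t * ksq k powr \<alpha>) * norm (a k)))"
  unfolding free_evol_partial_def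
  by (rule order_trans[OF norm_sum]) (simp add: norm_free_mode)

lemma borel_measurable_kdot [measurable (raw)]:
  assumes [measurable]: "X \<in> borel_measurable N"
  shows "(\<lambda>n. kdot k (X n)) \<in> borel_measurable N"
proof -
  have [measurable]: "(\<lambda>n. X n $ i) \<in> borel_measurable N" for i
    by (rule measurable_compose[OF _ borel_measurable_nth]) fact
  show ?thesis unfolding kdot_def by measurable
qed

lemma borel_measurable_cis [measurable]: "cis \<in> borel_measurable borel"
  by (intro borel_measurable_continuous_onI continuous_intros)

lemma borel_measurable_norm_free_evol_partial [measurable (raw)]:
  fixes W :: "'n \<Rightarrow> 'w"
  assumes [measurable]: "W \<in> measurable N M" "Tf \<in> borel_measurable N" "X \<in> borel_measurable N"
    "\<And>k. l k \<in> borel_measurable M"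
  shows "(\<lambda>n. norm (free_evol_partial \<alpha> a l J (W n) (Tf n) (X n))) \<in> borel_measurable N"
  unfolding norm_vec_eq_sqrt_sum free_evol_partial_nth by measurable

section \<open>Moments of the truncated free evolution\<close>

lemma torus_in_sets_borel [measurable, simp]: "torus \<in> sets borel"
  by (simp add: torus_def)

lemma emeasure_torus_finite: "emeasure lborel torus < \<top>"
  using emeasure_lborel_cbox_finite[of 0 "\<chi> i. 2 * pi"] unfolding torus_def infinity_ennreal_def .

lemma emeasure_torus: "emeasure lborel torus = ennreal (measure lborel torus)"
  using emeasure_torus_finite by (simp add: emeasure_eq_ennreal_measure less_top)

lemma measure_torus_pos: "0 < measure lborel torus"
  unfolding torus_def by (auto simp: measure_lborel_cbox_eq Basis_vec_def inner_axis intro!: prod_pos)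

lemma nn_integral_torus_powr_le:
  fixes g :: "real^3 \<Rightarrow> real"
  assumes "1 \<le> \<rho>" and [measurable]: "g \<in> borel_measurable lborel" and "\<And>x. 0 \<le> g x"
  shows "epow (\<integral>\<^sup>+x\<in>torus. ennreal (g x) \<partial>lborel) \<rho>
           \<le> (\<integral>\<^sup>+x\<in>torus. ennreal (g x powr \<rho>) \<partial>lborel) * ennreal (measure lborel torus powr (\<rho> - 1))"
proof -
  have "epow (\<integral>\<^sup>+x. ennreal (g x) \<partial>restrict_space lborel torus) \<rho>
      \<le> (\<integral>\<^sup>+x. ennreal (g x powr \<rho>) \<partial>restrict_space lborel torus) *
         ennreal (measure (restrict_space lborel torus) (space (restrict_space lborel torus)) powr (\<rho> - 1))"
    using assms emeasure_torus_finite
    by (intro nn_integral_powr_le_finite_measure)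
       (auto simp: measurable_restrict_space1 emeasure_restrict_space space_restrict_space)
  then show ?thesis
    by (simp add: nn_integral_restrict_space measure_restrict_space space_restrict_space)
qed


lemma wLqLp_norm_eq_finite:
  fixes F :: "real \<Rightarrow> real^3 \<Rightarrow> complex^3"
  assumes q: "0 < q" and Lp_fin: "\<And>t. (\<integral>\<^sup>+x\<in>torus. ennreal (norm (F t x) powr p) \<partial>lborel) < \<top>"
  shows "wLqLp_norm T \<eta> q p F = epow (\<integral>\<^sup>+t\<in>{0<..<T}. ennreal (t powr (\<eta>*q) *
           enn2real (\<integral>\<^sup>+x\<in>torus. ennreal (norm (F t x) powr p) \<partial>lborel) powr (q/p)) \<partial>lborel) (1/q)"
proof -
  define X where "X t = (\<integral>\<^sup>+x\<in>torus. ennreal (norm (F t x) powr p) \<partial>lborel)" for t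
  have X_eq: "X t = ennreal (enn2real (X t))" for t
    using Lp_fin[of t] by (simp add: X_def)
  have "epow (ennreal (t powr \<eta>) * Lp_norm p (F t)) q = ennreal (t powr (\<eta>*q) * enn2real (X t) powr (q/p))" for t
  proof -
    have "Lp_norm p (F t) = epow (X t) (1/p)" by (simp add: Lp_norm_def X_def)
    also have "\<dots> = ennreal (enn2real (X t) powr (1/p))" by (subst X_eq) (simp add: epow_ennreal)
    finally have "epow (ennreal (t powr \<eta>) * Lp_norm p (F t)) q
        = ennreal ((t powr \<eta>) powr q * (enn2real (X t) powr (1/p)) powr q)"
      using q by (simp add: epow_ennreal_mult)
    also have "\<dots> = ennreal (t powr (\<eta>*q) * enn2real (X t) powr (q/p))" by (simp add: powr_powr)
    finally show ?thesis .
  qed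
  then show ?thesis by (simp add: wLqLp_norm_def X_def)
qed

lemma wLqLp_norm_powr_le:
  fixes F :: "real \<Rightarrow> real^3 \<Rightarrow> complex^3" and w :: "real \<Rightarrow> real"
  assumes p: "0 < p" "p \<le> q" and qr: "q \<le> r"
    and F_meas: "\<And>t. (\<lambda>x. norm (F t x)) \<in> borel_measurable lborel"
    and Lp_meas: "(\<lambda>t. \<integral>\<^sup>+x\<in>torus. ennreal (norm (F t x) powr p) \<partial>lborel) \<in> borel_measurable lborel"
    and Lp_fin: "\<And>t. (\<integral>\<^sup>+x\<in>torus. ennreal (norm (F t x) powr p) \<partial>lborel) < \<top>"
    and w_meas: "w \<in> borel_measurable lborel" and w_pos: "\<And>t. 0 < t \<Longrightarrow> 0 < w t"
    and W: "(\<integral>\<^sup>+t\<in>{0<..<T}. ennreal (w t) \<partial>lborel) = ennreal W" "0 \<le> W"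
  shows "epow (wLqLp_norm T \<eta> q p F) r \<le>
     (\<integral>\<^sup>+t\<in>{0<..<T}. ennreal (t powr (\<eta>*r) * w t powr (1 - r/q) * measure lborel torus powr (r/p - 1))
          * (\<integral>\<^sup>+x\<in>torus. ennreal (norm (F t x) powr r) \<partial>lborel) \<partial>lborel) * ennreal (W powr (r/q - 1))"
proof -
  define X where "X t = (\<integral>\<^sup>+x\<in>torus. ennreal (norm (F t x) powr p) \<partial>lborel)" for t
  define Z where "Z t = (\<integral>\<^sup>+x\<in>torus. ennreal (norm (F t x) powr r) \<partial>lborel)" for t
  define f where "f t = t powr (\<eta>*q) * enn2real (X t) powr (q/p)" for t
  define V where "V = measure lborel torus"
  define \<rho> where "\<rho> = r/q"
  have q0: "0 < q" and r0: "0 < r" using p qr by auto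
  have \<rho>: "1 \<le> \<rho>" using q0 qr by (simp add: \<rho>_def)
  have [measurable]: "X \<in> borel_measurable lborel" using Lp_meas by (simp add: X_def[abs_def])
  have f_meas: "f \<in> borel_measurable lborel" unfolding f_def[abs_def] by measurable
  have X_eq: "X t = ennreal (enn2real (X t))" for t
    using Lp_fin[of t] by (simp add: X_def)
  have norm_eq: "wLqLp_norm T \<eta> q p F = epow (\<integral>\<^sup>+t. ennreal (f t) \<partial>restrict_space lborel {0<..<T}) (1/q)"
    using wLqLp_norm_eq_finite[OF q0 Lp_fin, of T \<eta>] by (simp add: f_def X_def nn_integral_restrict_space)
  have pointwise: "ennreal (f t powr \<rho> * w t powr (1-\<rho>))
      \<le> ennreal (t powr (\<eta>*r) * w t powr (1-\<rho>) * V powr (r/p - 1)) * Z t" if t: "0 < t" for t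
  proof -
    define x where "x = enn2real (X t)"
    have x0: "0 \<le> x" by (simp add: x_def)
    have f_eq: "f t powr \<rho> = t powr (\<eta>*r) * x powr (r/p)"
      using t x0 q0 by (simp add: f_def x_def \<rho>_def powr_mult powr_powr)
    have "epow (X t) (r/p) \<le> Z t * ennreal (V powr (r/p - 1))"
      using nn_integral_torus_powr_le[of "r/p" "\<lambda>x. norm (F t x) powr p"] p qr F_meas[of t]
      by (simp add: X_def Z_def V_def powr_powr)
    also have "epow (X t) (r/p) = ennreal (x powr (r/p))"
      unfolding x_def by (subst X_eq) (simp add: epow_ennreal)
    finally have x_le: "ennreal (x powr (r/p)) \<le> Z t * ennreal (V powr (r/p - 1))" .
    have "ennreal (f t powr \<rho> * w t powr (1-\<rho>)) = ennreal (t powr (\<eta>*r) * w t powr (1-\<rho>)) * ennreal (x powr (r/p))"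
      by (simp add: f_eq ennreal_mult'' mult_ac)
    also have "\<dots> \<le> ennreal (t powr (\<eta>*r) * w t powr (1-\<rho>)) * (Z t * ennreal (V powr (r/p - 1)))"
      by (intro mult_left_mono x_le) simp
    also have "\<dots> = ennreal (t powr (\<eta>*r) * w t powr (1-\<rho>) * V powr (r/p - 1)) * Z t"
      by (simp add: ennreal_mult'' mult_ac)
    finally show ?thesis .
  qed
  have "epow (wLqLp_norm T \<eta> q p F) r = epow (\<integral>\<^sup>+t. ennreal (f t) \<partial>restrict_space lborel {0<..<T}) \<rho>"
    using q0 r0 by (simp add: norm_eq epow_epow \<rho>_def)
  also have "\<dots> \<le> (\<integral>\<^sup>+t. ennreal (f t powr \<rho> * w t powr (1-\<rho>)) \<partial>restrict_space lborel {0<..<T}) *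
      ennreal (enn2real (\<integral>\<^sup>+t. ennreal (w t) \<partial>restrict_space lborel {0<..<T}) powr (\<rho> - 1))"
    using W w_pos
    by (intro nn_integral_Holder_weighted \<rho> measurable_restrict_space1 f_meas w_meas)
       (auto simp: f_def space_restrict_space nn_integral_restrict_space)
  also have "\<dots> \<le> (\<integral>\<^sup>+t\<in>{0<..<T}. ennreal (t powr (\<eta>*r) * w t powr (1-\<rho>) * V powr (r/p - 1)) * Z t \<partial>lborel) *
      ennreal (W powr (\<rho> - 1))"
  proof (intro mult_mono)
    show "(\<integral>\<^sup>+t. ennreal (f t powr \<rho> * w t powr (1-\<rho>)) \<partial>restrict_space lborel {0<..<T})
        \<le> (\<integral>\<^sup>+t\<in>{0<..<T}. ennreal (t powr (\<eta>*r) * w t powr (1-\<rho>) * V powr (r/p - 1)) * Z t \<partial>lborel)"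
      by (subst nn_integral_restrict_space) (auto intro!: nn_integral_mono pointwise split: split_indicator)
  qed (use W in \<open>auto simp: nn_integral_restrict_space\<close>)
  finally show ?thesis by (simp add: \<rho>_def Z_def V_def)
qed

lemma Hs_norm_nonneg: "0 \<le> Hs_norm s a"
  by (simp add: Hs_norm_def infsum_nonneg)

lemma free_evol_partial_zero:
  "(\<And>k. k \<in> J \<Longrightarrow> a k = 0) \<Longrightarrow> free_evol_partial \<alpha> a l J \<omega> t x = 0"
  unfolding free_evol_partial_def by (intro sum.neutral) (simp add: free_mode_def vec_eq_iff)

lemma Lp_free_evol_partial_finite:
  assumes "0 < p"
  shows "(\<integral>\<^sup>+x\<in>torus. ennreal (norm (free_evol_partial \<alpha> a l J \<omega> t x) powr p) \<partial>lborel) < \<top>"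
proof -
  define B where "B = (\<Sum>k\<in>J. \<bar>l k \<omega>\<bar> * (exp (- t * ksq k powr \<alpha>) * norm (a k)))"
  have "(\<integral>\<^sup>+x\<in>torus. ennreal (norm (free_evol_partial \<alpha> a l J \<omega> t x) powr p) \<partial>lborel)
      \<le> (\<integral>\<^sup>+x\<in>torus. ennreal (B powr p) \<partial>lborel)"
    unfolding B_def using assms
    by (intro nn_integral_mono mult_right_mono ennreal_leI powr_mono2 norm_free_evol_partial_le) auto
  also have "\<dots> = ennreal (B powr p) * emeasure lborel torus"
    by (simp add: nn_integral_cmult_indicator)
  also have "\<dots> < \<top>" by (simp add: emeasure_torus ennreal_mult_less_top)
  finally show ?thesis .
qed

lemma nn_integral_moment_free_evol_partial_le:
  assumes "subgaussian_family M l c" and J: "finite J" and r: "1 \<le> r"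
  shows "(\<integral>\<^sup>+\<omega>. (\<integral>\<^sup>+x\<in>torus. ennreal (norm (free_evol_partial \<alpha> a l J \<omega> t x) powr r) \<partial>lborel) \<partial>M)
           \<le> ennreal ((72 * exp c * sqrt r * sqrt (heat_variance \<alpha> a J t)) powr r * measure lborel torus)"
proof -
  interpret subgaussian_family M l c by fact
  have "sigma_finite_measure M" by unfold_locales
  then interpret pair_sigma_finite M "lborel :: (real^3) measure"
    by (intro pair_sigma_finite.intro sigma_finite_lborel)
  define K where "K = 72 * exp c * sqrt r * sqrt (heat_variance \<alpha> a J t)"
  have "(\<lambda>(\<omega>, x). ennreal (norm (free_evol_partial \<alpha> a l J \<omega> t x) powr r) * indicator torus x)
      \<in> borel_measurable (M \<Otimes>\<^sub>M lborel)"
    by measurable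
  from Fubini'[OF this]
  have "(\<integral>\<^sup>+\<omega>. (\<integral>\<^sup>+x\<in>torus. ennreal (norm (free_evol_partial \<alpha> a l J \<omega> t x) powr r) \<partial>lborel) \<partial>M)
      = (\<integral>\<^sup>+x. (\<integral>\<^sup>+\<omega>. ennreal (norm (free_evol_partial \<alpha> a l J \<omega> t x) powr r) * indicator torus x \<partial>M) \<partial>lborel)"
    by simp
  also have "\<dots> = (\<integral>\<^sup>+x\<in>torus. (\<integral>\<^sup>+\<omega>. ennreal (norm (free_evol_partial \<alpha> a l J \<omega> t x) powr r) \<partial>M) \<partial>lborel)"
    by (intro nn_integral_cong nn_integral_multc) simp
  also have "\<dots> \<le> (\<integral>\<^sup>+x\<in>torus. ennreal (K powr r) \<partial>lborel)"
  proof (intro nn_integral_mono mult_right_mono)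
    fix x
    show "(\<integral>\<^sup>+\<omega>. ennreal (norm (free_evol_partial \<alpha> a l J \<omega> t x) powr r) \<partial>M) \<le> ennreal (K powr r)"
      unfolding free_evol_partial_def K_def heat_variance_eq_sum_norm_free_mode[of \<alpha> a J t x]
      by (rule Khintchine_vec[OF J r])
  qed simp
  also have "\<dots> = ennreal (K powr r * measure lborel torus)"
    by (simp add: nn_integral_cmult_indicator emeasure_torus ennreal_mult'')
  finally show ?thesis by (simp add: K_def)
qed


lemma heat_weight_powr_eq:
  fixes t \<sigma> K V \<eta> p q r :: real
  assumes t: "0 < t" and \<sigma>: "0 < \<sigma>" and q: "0 < q" and K: "0 \<le> K" and V: "0 < V"
  defines "w \<equiv> t powr (\<eta>*q) * \<sigma> powr (q/2)"
  shows "t powr (\<eta>*r) * w powr (1 - r/q) * V powr (r/p - 1) * ((K * sqrt \<sigma>) powr r * V)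
           = K powr r * V powr (r/p) * w"
proof -
  have K_eq: "(K * sqrt \<sigma>) powr r = K powr r * \<sigma> powr (r/2)"
    using K \<sigma> by (simp add: powr_mult powr_half_sqrt[symmetric] powr_powr)
  have "w powr (1 - r/q) = t powr (\<eta>*q*(1 - r/q)) * \<sigma> powr (q/2*(1 - r/q))"
    using t \<sigma> by (simp add: w_def powr_mult powr_powr)
  then have "t powr (\<eta>*r) * w powr (1 - r/q) * \<sigma> powr (r/2)
      = t powr (\<eta>*r + \<eta>*q*(1 - r/q)) * \<sigma> powr (q/2*(1 - r/q) + r/2)"
    by (simp add: powr_add mult_ac)
  also have "\<eta>*r + \<eta>*q*(1 - r/q) = \<eta>*q" using q by (simp add: field_simps)
  also have "q/2*(1 - r/q) + r/2 = q/2" using q by (simp add: field_simps)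
  finally have tw: "t powr (\<eta>*r) * w powr (1 - r/q) * \<sigma> powr (r/2) = w" by (simp add: w_def)
  have VV: "V powr (r/p - 1) * V = V powr (r/p)" using V by (simp add: powr_diff)
  have "t powr (\<eta>*r) * w powr (1 - r/q) * V powr (r/p - 1) * ((K * sqrt \<sigma>) powr r * V)
      = K powr r * (V powr (r/p - 1) * V) * (t powr (\<eta>*r) * w powr (1 - r/q) * \<sigma> powr (r/2))"
    by (simp add: K_eq mult_ac)
  then show ?thesis by (simp only: tw VV)
qed

lemma nn_integral_time_moment_free_evol_partial_le:
  assumes sg: "subgaussian_family M l c" and J: "finite J" and r: "1 \<le> r"
    and [measurable]: "h \<in> borel_measurable lborel"
  shows "(\<integral>\<^sup>+\<omega>. (\<integral>\<^sup>+t\<in>{0<..<T}. ennreal (h t) *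
             (\<integral>\<^sup>+x\<in>torus. ennreal (norm (free_evol_partial \<alpha> a l J \<omega> t x) powr r) \<partial>lborel) \<partial>lborel) \<partial>M)
    \<le> (\<integral>\<^sup>+t\<in>{0<..<T}. ennreal (h t *
             ((72 * exp c * sqrt r * sqrt (heat_variance \<alpha> a J t)) powr r * measure lborel torus)) \<partial>lborel)"
proof -
  interpret subgaussian_family M l c by (rule sg)
  have "sigma_finite_measure M" by unfold_locales
  then interpret pair_sigma_finite M "lborel :: real measure"
    by (intro pair_sigma_finite.intro sigma_finite_lborel)
  define Z where "Z \<omega> t = (\<integral>\<^sup>+x\<in>torus. ennreal (norm (free_evol_partial \<alpha> a l J \<omega> t x) powr r) \<partial>lborel)" for \<omega> t
  define B where "B t = (72 * exp c * sqrt r * sqrt (heat_variance \<alpha> a J t)) powr r * measure lborel torus" for t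
  have Z_meas: "(\<lambda>\<omega>. Z \<omega> t) \<in> borel_measurable M" for t
    unfolding Z_def by measurable
  have "(\<lambda>(\<omega>, t). ennreal (h t) * Z \<omega> t * indicator {0<..<T} t) \<in> borel_measurable (M \<Otimes>\<^sub>M lborel)"
    unfolding Z_def by measurable
  from Fubini'[OF this]
  have "(\<integral>\<^sup>+\<omega>. (\<integral>\<^sup>+t\<in>{0<..<T}. ennreal (h t) * Z \<omega> t \<partial>lborel) \<partial>M)
      = (\<integral>\<^sup>+t. (\<integral>\<^sup>+\<omega>. ennreal (h t) * Z \<omega> t * indicator {0<..<T} t \<partial>M) \<partial>lborel)"
    by simp
  also have "\<dots> = (\<integral>\<^sup>+t\<in>{0<..<T}. ennreal (h t) * (\<integral>\<^sup>+\<omega>. Z \<omega> t \<partial>M) \<partial>lborel)"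
    by (intro nn_integral_cong) (simp add: nn_integral_cmult Z_meas split: split_indicator)
  also have "\<dots> \<le> (\<integral>\<^sup>+t\<in>{0<..<T}. ennreal (h t) * ennreal (B t) \<partial>lborel)"
    unfolding Z_def B_def using nn_integral_moment_free_evol_partial_le[OF sg J r]
    by (intro nn_integral_mono mult_right_mono mult_left_mono) auto
  also have "\<dots> = (\<integral>\<^sup>+t\<in>{0<..<T}. ennreal (h t * B t) \<partial>lborel)"
    by (simp add: B_def ennreal_mult'')
  finally show ?thesis by (simp only: Z_def B_def)
qed

lemma moment_free_evol_partial_le_heat_integral:
  assumes sg: "subgaussian_family M l c"
    and p: "1 \<le> p" "p \<le> q" and qr: "q \<le> r" and J: "finite J" and nz: "\<exists>k\<in>J. a k \<noteq> 0"
    and W: "(\<integral>\<^sup>+t\<in>{0<..<T}. ennreal (t powr (\<eta>*q) * heat_variance \<alpha> a J t powr (q/2)) \<partial>lborel) = ennreal W"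
      "0 \<le> W"
  shows "(\<integral>\<^sup>+\<omega>. epow (wLqLp_norm T \<eta> q p (free_evol_partial \<alpha> a l J \<omega>)) r \<partial>M)
          \<le> ennreal ((72 * exp c * sqrt r) powr r * measure lborel torus powr (r/p) * W powr (r/q))"
proof -
  interpret subgaussian_family M l c by (rule sg)
  have p0: "0 < p" and q0: "0 < q" and r1: "1 \<le> r" using p qr by auto
  define \<sigma> where "\<sigma> = heat_variance \<alpha> a J"
  define K where "K = 72 * exp c * sqrt r"
  define V where "V = measure lborel torus"
  define w where "w t = t powr (\<eta>*q) * \<sigma> t powr (q/2)" for t
  define h where "h t = t powr (\<eta>*r) * w t powr (1 - r/q) * V powr (r/p - 1)" for t
  define Z where "Z \<omega> t = (\<integral>\<^sup>+x\<in>torus. ennreal (norm (free_evol_partial \<alpha> a l J \<omega> t x) powr r) \<partial>lborel)" for \<omega> t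
  have \<sigma>_pos: "0 < \<sigma> t" for t using nz J heat_variance_pos by (auto simp: \<sigma>_def)
  have V: "0 < V" by (simp add: V_def measure_torus_pos)
  have w_meas [measurable]: "w \<in> borel_measurable lborel"
    unfolding w_def[abs_def] \<sigma>_def heat_variance_def by measurable
  have h_meas [measurable]: "h \<in> borel_measurable lborel" unfolding h_def[abs_def] by measurable
  have w_pos: "0 < w t" if "0 < t" for t using that \<sigma>_pos[of t] by (simp add: w_def)
  have path: "epow (wLqLp_norm T \<eta> q p (free_evol_partial \<alpha> a l J \<omega>)) r
      \<le> (\<integral>\<^sup>+t\<in>{0<..<T}. ennreal (h t) * Z \<omega> t \<partial>lborel) * ennreal (W powr (r/q - 1))"
    if [measurable]: "\<omega> \<in> space M" for \<omega>
    unfolding h_def Z_def V_def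
  proof (rule wLqLp_norm_powr_le)
    show "(\<lambda>x. norm (free_evol_partial \<alpha> a l J \<omega> t x)) \<in> borel_measurable lborel" for t
      by measurable
    show "(\<lambda>t. \<integral>\<^sup>+x\<in>torus. ennreal (norm (free_evol_partial \<alpha> a l J \<omega> t x) powr p) \<partial>lborel)
        \<in> borel_measurable lborel"
      by measurable
    show "w \<in> borel_measurable lborel" by (rule w_meas)
  qed (use p0 p qr w_pos W Lp_free_evol_partial_finite[OF p0] in \<open>simp_all add: w_def \<sigma>_def\<close>)
  \<comment> \<open>the weight \<open>w\<close> is chosen so that \<open>h\<close> times the Khintchine bound is a multiple of \<open>w\<close>\<close>
  have h_bound: "(\<integral>\<^sup>+t\<in>{0<..<T}. ennreal (h t * ((K * sqrt (\<sigma> t)) powr r * V)) \<partial>lborel)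
      = ennreal (K powr r * V powr (r/p)) * ennreal W"
  proof -
    have "ennreal (h t * ((K * sqrt (\<sigma> t)) powr r * V)) = ennreal (K powr r * V powr (r/p)) * ennreal (w t)"
      if "0 < t" for t
    proof -
      have "h t * ((K * sqrt (\<sigma> t)) powr r * V) = K powr r * V powr (r/p) * w t"
        unfolding h_def w_def K_def using that \<sigma>_pos[of t] q0 V r1 by (intro heat_weight_powr_eq) auto
      then show ?thesis using w_pos[OF that] by (simp add: ennreal_mult'')
    qed
    then have "(\<integral>\<^sup>+t\<in>{0<..<T}. ennreal (h t * ((K * sqrt (\<sigma> t)) powr r * V)) \<partial>lborel)
        = (\<integral>\<^sup>+t\<in>{0<..<T}. ennreal (K powr r * V powr (r/p)) * ennreal (w t) \<partial>lborel)"
      by (intro nn_integral_cong) (simp split: split_indicator)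
    also have "\<dots> = ennreal (K powr r * V powr (r/p)) * (\<integral>\<^sup>+t\<in>{0<..<T}. ennreal (w t) \<partial>lborel)"
      by (simp add: nn_integral_cmult mult.assoc)
    finally show ?thesis using W by (simp add: w_def \<sigma>_def)
  qed
  have "(\<integral>\<^sup>+\<omega>. epow (wLqLp_norm T \<eta> q p (free_evol_partial \<alpha> a l J \<omega>)) r \<partial>M)
      \<le> (\<integral>\<^sup>+\<omega>. (\<integral>\<^sup>+t\<in>{0<..<T}. ennreal (h t) * Z \<omega> t \<partial>lborel) * ennreal (W powr (r/q - 1)) \<partial>M)"
    using path by (intro nn_integral_mono) auto
  also have "\<dots> = (\<integral>\<^sup>+\<omega>. (\<integral>\<^sup>+t\<in>{0<..<T}. ennreal (h t) * Z \<omega> t \<partial>lborel) \<partial>M) * ennreal (W powr (r/q - 1))"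
    by (rule nn_integral_multc) (unfold Z_def, measurable)
  also have "\<dots> \<le> (\<integral>\<^sup>+t\<in>{0<..<T}. ennreal (h t * ((K * sqrt (\<sigma> t)) powr r * V)) \<partial>lborel) * ennreal (W powr (r/q - 1))"
    unfolding Z_def K_def \<sigma>_def V_def
    by (intro mult_right_mono nn_integral_time_moment_free_evol_partial_le[OF sg J r1 h_meas]) simp
  also have "\<dots> = ennreal (K powr r * V powr (r/p) * (W * W powr (r/q - 1)))"
    using W(2) by (simp add: h_bound ennreal_mult' mult.assoc)
  also have "W * W powr (r/q - 1) = W powr (r/q)"
    using W(2) by (cases "W = 0") (simp_all add: powr_diff)
  finally show ?thesis by (simp add: K_def V_def)
qed

lemma moment_free_evol_partial_le:
  assumes sg: "subgaussian_family M l c"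
    and \<alpha>: "\<alpha> > 0" and \<eta>: "\<eta> > 0" and T: "T > 0" and p: "2 \<le> p" and pq: "p \<le> q" and qr: "q \<le> r"
    and s: "- 2 * \<alpha> * \<eta> - 2 * \<alpha> / q \<le> s" and J: "finite J" and H: "in_Hs s a"
  shows "(\<integral>\<^sup>+\<omega>. epow (wLqLp_norm T \<eta> q p (free_evol_partial \<alpha> a l J \<omega>)) r \<partial>M)
          \<le> ennreal ((72 * exp c * sqrt r * measure lborel torus powr (1/p) *
                      heat_time_const \<alpha> \<eta> q T powr (1/q) * Hs_norm s a) powr r)"
proof -
  define V C1 Hs where "V = measure lborel torus" and "C1 = heat_time_const \<alpha> \<eta> q T" and "Hs = Hs_norm s a"
  have p0: "0 < p" and q0: "0 < q" and r0: "0 < r" using p pq qr by auto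
  have V: "0 < V" by (simp add: V_def measure_torus_pos)
  have C1: "0 < C1" using T by (simp add: C1_def heat_time_const_pos)
  have Hs: "0 \<le> Hs" by (simp add: Hs_def Hs_norm_nonneg)
  have rhs_eq: "(72 * exp c * sqrt r * V powr (1/p) * C1 powr (1/q) * Hs) powr r
      = (72 * exp c * sqrt r) powr r * V powr (r/p) * (C1 * Hs powr q) powr (r/q)"
    using V C1 Hs p0 q0 by (simp add: powr_mult powr_powr mult_ac)
  show ?thesis
  proof (cases "\<forall>k\<in>J. a k = 0")
    case True
    then show ?thesis using p0 q0 r0 by (simp add: free_evol_partial_zero wLqLp_norm_def Lp_norm_def)
  next
    case False
    define W where "W = enn2real (\<integral>\<^sup>+t\<in>{0<..<T}. ennreal (t powr (\<eta>*q) * heat_variance \<alpha> a J t powr (q/2)) \<partial>lborel)"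
    have W_int: "(\<integral>\<^sup>+t\<in>{0<..<T}. ennreal (t powr (\<eta>*q) * heat_variance \<alpha> a J t powr (q/2)) \<partial>lborel)
        \<le> ennreal (C1 * Hs powr q)"
      unfolding C1_def Hs_def using nn_integral_heat_variance_le[OF \<alpha> \<eta> _ T s J H] p pq by simp
    then have "(\<integral>\<^sup>+t\<in>{0<..<T}. ennreal (t powr (\<eta>*q) * heat_variance \<alpha> a J t powr (q/2)) \<partial>lborel) < \<top>"
      by (rule le_less_trans) simp
    then have W_eq: "(\<integral>\<^sup>+t\<in>{0<..<T}. ennreal (t powr (\<eta>*q) * heat_variance \<alpha> a J t powr (q/2)) \<partial>lborel) = ennreal W"
      unfolding W_def by simp
    have W0: "0 \<le> W" by (simp add: W_def)
    have W_le: "W \<le> C1 * Hs powr q"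
      using W_int C1 Hs unfolding W_eq by (subst (asm) ennreal_le_iff) auto
    have "(\<integral>\<^sup>+\<omega>. epow (wLqLp_norm T \<eta> q p (free_evol_partial \<alpha> a l J \<omega>)) r \<partial>M)
        \<le> ennreal ((72 * exp c * sqrt r) powr r * V powr (r/p) * W powr (r/q))"
      unfolding V_def using sg p pq qr J False W_eq W0
      by (intro moment_free_evol_partial_le_heat_integral) auto
    also have "\<dots> \<le> ennreal ((72 * exp c * sqrt r) powr r * V powr (r/p) * (C1 * Hs powr q) powr (r/q))"
      using W0 W_le q0 r0 by (intro ennreal_leI mult_left_mono powr_mono2) auto
    also have "\<dots> = ennreal ((72 * exp c * sqrt r * V powr (1/p) * C1 powr (1/q) * Hs) powr r)"
      by (simp only: rhs_eq)
    finally show ?thesis by (simp only: V_def C1_def Hs_def)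
  qed
qed

section \<open>Passage to the full series\<close>

definition int_cube :: "nat \<Rightarrow> (int^3) set" where
  "int_cube n = {k. \<forall>i. \<bar>k $ i\<bar> \<le> int n}"

lemma finite_int_cube: "finite (int_cube n)"
proof -
  define g where "g k = (k $ 1, k $ 2, k $ 3)" for k :: "int^3"
  have "inj g" unfolding g_def by (auto intro!: injI simp: vec_eq_iff forall_3)
  moreover have "g ` int_cube n \<subseteq> {-int n..int n} \<times> {-int n..int n} \<times> {-int n..int n}"
    by (auto simp: g_def int_cube_def abs_le_iff) (metis add.inverse_inverse neg_le_iff_le)+
  ultimately show ?thesis
    by (meson finite_SigmaI finite_atLeastAtMost_int finite_imageD finite_subset inj_on_subset subset_UNIV)
qed

lemma eventually_subset_int_cube:
  assumes "finite X"
  shows "eventually (\<lambda>n. X \<subseteq> int_cube n) sequentially"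
  using assms
proof (induction X rule: finite_induct)
  case empty
  then show ?case by simp
next
  case (insert k X)
  have "k \<in> int_cube n" if "nat (\<Sum>i\<in>UNIV. \<bar>k $ i\<bar>) \<le> n" for n
  proof -
    have "\<bar>k $ i\<bar> \<le> (\<Sum>i\<in>UNIV. \<bar>k $ i\<bar>)" for i by (rule member_le_sum) auto
    moreover have "(\<Sum>i\<in>UNIV. \<bar>k $ i\<bar>) \<le> int n" using that by (simp add: nat_le_iff)
    ultimately show ?thesis by (auto simp: int_cube_def intro: order.trans)
  qed
  then have "eventually (\<lambda>n. k \<in> int_cube n) sequentially" by (auto simp: eventually_sequentially)
  with insert.IH show ?case by eventually_elim auto
qed

lemma tendsto_sum_int_cube:
  fixes f :: "int^3 \<Rightarrow> 'b::{topological_comm_monoid_add, t2_space}"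
  assumes "f summable_on UNIV"
  shows "(\<lambda>n. sum f (int_cube n)) \<longlonglongrightarrow> infsum f UNIV"
proof -
  have "(sum f \<longlongrightarrow> infsum f UNIV) (finite_subsets_at_top UNIV)"
    using has_sum_infsum[OF assms] by (simp add: has_sum_def)
  moreover have "filterlim int_cube (finite_subsets_at_top UNIV) sequentially"
    unfolding filterlim_finite_subsets_at_top
    by (auto intro: eventually_mono[OF eventually_subset_int_cube] simp: finite_int_cube)
  ultimately show ?thesis by (rule filterlim_compose)
qed

lemma norm_free_evol_powr_le_liminf:
  assumes "0 < p"
  shows "ennreal (norm (free_evol \<alpha> a l \<omega> t x) powr p)
           \<le> liminf (\<lambda>n. ennreal (norm (free_evol_partial \<alpha> a l (int_cube n) \<omega> t x) powr p))"
proof -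
  define f where "f k = l k \<omega> *\<^sub>R free_mode \<alpha> a t x k" for k
  have F: "free_evol \<alpha> a l \<omega> t x = infsum f UNIV"
    unfolding f_def[abs_def] by (rule free_evol_eq_infsum)
  have S: "free_evol_partial \<alpha> a l J \<omega> t x = sum f J" for J by (simp add: free_evol_partial_def f_def)
  \<comment> \<open>a divergent series has sum \<open>0\<close> by convention, which makes the inequality trivial\<close>
  show ?thesis
  proof (cases "f summable_on UNIV")
    case True
    then have "(\<lambda>n. ennreal (norm (sum f (int_cube n)) powr p)) \<longlonglongrightarrow> ennreal (norm (infsum f UNIV) powr p)"
      using assms by (intro tendsto_ennrealI tendsto_powr' tendsto_norm tendsto_sum_int_cube) auto
    then have "liminf (\<lambda>n. ennreal (norm (sum f (int_cube n)) powr p)) = ennreal (norm (infsum f UNIV) powr p)"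
      by (intro lim_imp_Liminf) auto
    then show ?thesis by (simp add: F S)
  next
    case False
    then show ?thesis by (simp add: F infsum_not_exists)
  qed
qed

lemma wLqLp_norm_powr_le_liminf:
  fixes G :: "real \<Rightarrow> real^3 \<Rightarrow> complex^3" and Gs :: "nat \<Rightarrow> real \<Rightarrow> real^3 \<Rightarrow> complex^3"
  assumes pointwise: "\<And>t x. ennreal (norm (G t x) powr p) \<le> liminf (\<lambda>n. ennreal (norm (Gs n t x) powr p))"
    and meas_x: "\<And>n t. (\<lambda>x. ennreal (norm (Gs n t x) powr p) * indicator torus x) \<in> borel_measurable lborel"
    and meas_t: "\<And>n. (\<lambda>t. epow (ennreal (t powr \<eta>) * Lp_norm p (Gs n t)) q * indicator {0<..<T} t) \<in> borel_measurable lborel"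
    and p: "p > 0" and q: "q > 0" and r: "r > 0"
  shows "epow (wLqLp_norm T \<eta> q p G) r \<le> liminf (\<lambda>n. epow (wLqLp_norm T \<eta> q p (Gs n)) r)"
proof -
  define g where "g t = epow (ennreal (t powr \<eta>) * Lp_norm p (G t)) q * indicator {0<..<T} t" for t
  define gs where "gs n t = epow (ennreal (t powr \<eta>) * Lp_norm p (Gs n t)) q * indicator {0<..<T} t" for n t
  have Lp_le: "Lp_norm p (G t) \<le> liminf (\<lambda>n. Lp_norm p (Gs n t))" for t
  proof -
    have "(\<integral>\<^sup>+x\<in>torus. ennreal (norm (G t x) powr p) \<partial>lborel)
        \<le> (\<integral>\<^sup>+x. liminf (\<lambda>n. ennreal (norm (Gs n t x) powr p) * indicator torus x) \<partial>lborel)"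
      by (intro nn_integral_mono mult_indicator_le_liminf pointwise)
    also have "\<dots> \<le> liminf (\<lambda>n. \<integral>\<^sup>+x\<in>torus. ennreal (norm (Gs n t x) powr p) \<partial>lborel)"
      by (intro nn_integral_liminf meas_x)
    finally have "Lp_norm p (G t) \<le> epow (liminf (\<lambda>n. \<integral>\<^sup>+x\<in>torus. ennreal (norm (Gs n t x) powr p) \<partial>lborel)) (1/p)"
      unfolding Lp_norm_def using p by (intro epow_mono) auto
    also have "\<dots> \<le> liminf (\<lambda>n. Lp_norm p (Gs n t))"
      unfolding Lp_norm_def using p by (intro epow_liminf_le) auto
    finally show ?thesis .
  qed
  have g_le: "g t \<le> liminf (\<lambda>n. gs n t)" for t
  proof -
    have "ennreal (t powr \<eta>) * Lp_norm p (G t) \<le> ennreal (t powr \<eta>) * liminf (\<lambda>n. Lp_norm p (Gs n t))"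
      by (rule mult_left_mono[OF Lp_le]) simp
    also have "\<dots> \<le> liminf (\<lambda>n. ennreal (t powr \<eta>) * Lp_norm p (Gs n t))"
      by (rule mult_liminf_le)
    finally have "epow (ennreal (t powr \<eta>) * Lp_norm p (G t)) q
        \<le> epow (liminf (\<lambda>n. ennreal (t powr \<eta>) * Lp_norm p (Gs n t))) q"
      by (rule epow_mono[OF q])
    also have "\<dots> \<le> liminf (\<lambda>n. epow (ennreal (t powr \<eta>) * Lp_norm p (Gs n t)) q)"
      by (rule epow_liminf_le[OF q])
    finally show ?thesis unfolding g_def gs_def by (rule mult_indicator_le_liminf)
  qed
  have "(\<integral>\<^sup>+t. g t \<partial>lborel) \<le> (\<integral>\<^sup>+t. liminf (\<lambda>n. gs n t) \<partial>lborel)"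
    by (intro nn_integral_mono g_le)
  also have "\<dots> \<le> liminf (\<lambda>n. \<integral>\<^sup>+t. gs n t \<partial>lborel)"
    by (intro nn_integral_liminf) (use meas_t in \<open>simp add: gs_def[abs_def]\<close>)
  finally have "epow (\<integral>\<^sup>+t. g t \<partial>lborel) (r/q) \<le> epow (liminf (\<lambda>n. \<integral>\<^sup>+t. gs n t \<partial>lborel)) (r/q)"
    using q r by (intro epow_mono) auto
  also have "\<dots> \<le> liminf (\<lambda>n. epow (\<integral>\<^sup>+t. gs n t \<partial>lborel) (r/q))"
    using q r by (intro epow_liminf_le) auto
  finally show ?thesis
    using q r by (simp add: wLqLp_norm_def g_def gs_def epow_epow)
qed

lemma moment_free_evol_le_liminf:
  assumes sg: "subgaussian_family M l c" and p: "0 < p" and q: "0 < q" and r: "0 < r"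
  shows "(\<integral>\<^sup>+\<omega>. epow (wLqLp_norm T \<eta> q p (free_evol \<alpha> a l \<omega>)) r \<partial>M)
           \<le> liminf (\<lambda>n. \<integral>\<^sup>+\<omega>. epow (wLqLp_norm T \<eta> q p (free_evol_partial \<alpha> a l (int_cube n) \<omega>)) r \<partial>M)"
proof -
  interpret subgaussian_family M l c by (rule sg)
  have "(\<integral>\<^sup>+\<omega>. epow (wLqLp_norm T \<eta> q p (free_evol \<alpha> a l \<omega>)) r \<partial>M)
      \<le> (\<integral>\<^sup>+\<omega>. liminf (\<lambda>n. epow (wLqLp_norm T \<eta> q p (free_evol_partial \<alpha> a l (int_cube n) \<omega>)) r) \<partial>M)"
  proof (intro nn_integral_mono wLqLp_norm_powr_le_liminf norm_free_evol_powr_le_liminf p q r)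
    fix \<omega> assume [measurable]: "\<omega> \<in> space M"
    show "(\<lambda>x. ennreal (norm (free_evol_partial \<alpha> a l (int_cube n) \<omega> t x) powr p) * indicator torus x)
        \<in> borel_measurable lborel" for n t
      by measurable
    show "(\<lambda>t. epow (ennreal (t powr \<eta>) * Lp_norm p (free_evol_partial \<alpha> a l (int_cube n) \<omega> t)) q
          * indicator {0<..<T} t) \<in> borel_measurable lborel" for n
      unfolding Lp_norm_def by measurable
  qed
  also have "\<dots> \<le> liminf (\<lambda>n. \<integral>\<^sup>+\<omega>. epow (wLqLp_norm T \<eta> q p (free_evol_partial \<alpha> a l (int_cube n) \<omega>)) r \<partial>M)"
    by (intro nn_integral_liminf) (simp add: wLqLp_norm_def Lp_norm_def)
  finally show ?thesis .
qed

lemma moment_free_evol_le: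
  assumes sg: "subgaussian_family M l c"
    and \<alpha>: "\<alpha> > 0" and \<eta>: "\<eta> > 0" and T: "T > 0" and p: "2 \<le> p" and pq: "p \<le> q" and qr: "q \<le> r"
    and s: "- 2 * \<alpha> * \<eta> - 2 * \<alpha> / q \<le> s" and H: "in_Hs s a"
  shows "(\<integral>\<^sup>+\<omega>. epow (wLqLp_norm T \<eta> q p (free_evol \<alpha> a l \<omega>)) r \<partial>M)
          \<le> ennreal ((72 * exp c * sqrt r * measure lborel torus powr (1/p) *
                      heat_time_const \<alpha> \<eta> q T powr (1/q) * Hs_norm s a) powr r)"
proof -
  have "0 < p" "0 < q" "0 < r" using p pq qr by auto
  then have "(\<integral>\<^sup>+\<omega>. epow (wLqLp_norm T \<eta> q p (free_evol \<alpha> a l \<omega>)) r \<partial>M)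
      \<le> liminf (\<lambda>n. \<integral>\<^sup>+\<omega>. epow (wLqLp_norm T \<eta> q p (free_evol_partial \<alpha> a l (int_cube n) \<omega>)) r \<partial>M)"
    by (intro moment_free_evol_le_liminf[OF sg])
  also have "\<dots> \<le> ennreal ((72 * exp c * sqrt r * measure lborel torus powr (1/p) *
                      heat_time_const \<alpha> \<eta> q T powr (1/q) * Hs_norm s a) powr r)"
    using moment_free_evol_partial_le[OF sg \<alpha> \<eta> T p pq qr s finite_int_cube H]
    by (intro Liminf_le) simp_all
  finally show ?thesis .
qed

lemma Lr_wLqLp_norm_le_of_moment_le:
  assumes r: "0 < r" and B: "0 \<le> B"
    and moment: "(\<integral>\<^sup>+\<omega>. epow (wLqLp_norm T \<eta> q p (F \<omega>)) r \<partial>M) \<le> ennreal (B powr r)"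
  shows "Lr_wLqLp_norm M r T \<eta> q p F \<le> ennreal B"
proof -
  have "Lr_wLqLp_norm M r T \<eta> q p F \<le> epow (ennreal (B powr r)) (1/r)"
    unfolding Lr_wLqLp_norm_def using r moment by (intro epow_mono) auto
  also have "\<dots> = ennreal B" using r B by (simp add: epow_ennreal powr_powr)
  finally show ?thesis .
qed

theorem lemma3p6:
  fixes M :: "'w measure" and l :: "int^3 \<Rightarrow> 'w \<Rightarrow> real" and c :: real
    and \<alpha> p q \<eta> s T :: real
  assumes "prob_space M"
    and "prob_space.indep_vars M (\<lambda>_. borel) l UNIV"
    and "\<And>k. integrable M (l k)"
    and "\<And>k. (\<integral>\<omega>. l k \<omega> \<partial>M) = 0"
    and "c > 0"
    and "\<And>k \<gamma>. (\<integral>\<^sup>+ \<omega>. ennreal (exp (\<gamma> * l k \<omega>)) \<partial>M) \<le> ennreal (exp (c * \<gamma>^2))"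
    and "\<alpha> > 0" and "2 \<le> p" and "p \<le> q" and "\<eta> > 0" and "T > 0"
    and "s \<ge> - 2 * \<alpha> * \<eta> - 2 * \<alpha> / q + 1 / 2 - 1 / p"
  shows "\<exists>C>0. \<forall>r a. q \<le> r \<longrightarrow> in_Hs s a \<longrightarrow>
           Lr_wLqLp_norm M r T \<eta> q p (free_evol \<alpha> a l)
             \<le> ennreal (C * sqrt r * Hs_norm s a)"
proof -
  have sg: "subgaussian_family M l c"
    using assms(1,2,6) by (simp add: subgaussian_family_def subgaussian_family_axioms_def)
  have "1 / p \<le> 1 / 2" using assms(8) by (intro divide_left_mono) auto
  then have s: "- 2 * \<alpha> * \<eta> - 2 * \<alpha> / q \<le> s" using assms(12) by linarith
  define C where "C = 72 * exp c * measure lborel torus powr (1/p) * heat_time_const \<alpha> \<eta> q T powr (1/q)"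
  have C0: "C > 0"
    unfolding C_def using heat_time_const_pos[OF assms(11), of \<alpha> \<eta> q] measure_torus_pos
    by (intro mult_pos_pos) (auto simp: powr_gt_zero)
  have "Lr_wLqLp_norm M r T \<eta> q p (free_evol \<alpha> a l) \<le> ennreal (C * sqrt r * Hs_norm s a)"
    if qr: "q \<le> r" and H: "in_Hs s a" for r a
  proof (rule Lr_wLqLp_norm_le_of_moment_le)
    show r0: "0 < r" using qr assms(8,9) by simp
    show "0 \<le> C * sqrt r * Hs_norm s a"
      using C0 r0 Hs_norm_nonneg[of s a] by (intro mult_nonneg_nonneg) auto
    show "(\<integral>\<^sup>+\<omega>. epow (wLqLp_norm T \<eta> q p (free_evol \<alpha> a l \<omega>)) r \<partial>M)
        \<le> ennreal ((C * sqrt r * Hs_norm s a) powr r)"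
      using moment_free_evol_le[OF sg assms(7,10,11,8,9) qr s H] by (simp add: C_def mult_ac)
  qed
  with C0 show ?thesis by blast
qed

end
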